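(* Let $(R,\mathfrak m)$ be a noetherian local ring, $\nu$ a valuation centered on $R$, and assume $I=\mathrm{Nil}(R)$ is the only associated prime ideal of $R$. Fix $n\ge1$ and take $y_1,\ldots,y_{r+s}\in I^n$ whose images generate $I^n/I^{n+1}$ as an $R_{\rm red}$-module. Let $b\in R\setminus I$ and let $\pi:R\to R^{(1)}$ be the local blowing up with respect to $\nu$ along $(b,y_1,\ldots,y_r)$, with $y_i^{(1)}=\pi(y_i)/b$ for $1\le i\le r$. If the images of $y_1,\ldots,y_r$ in $I^n/I^{n+1}$ are $R_{\rm red}$-linearly independent, then the images of $y_1^{(1)},\ldots,y_r^{(1)}$ in $I_{(1)}^n/I_{(1)}^{n+1}$ are $(R^{(1)})_{\rm red}$-linearly independent, where $I_{(1)}=\mathrm{Nil}(R^{(1)})$.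
   Context: All rings are commutative noetherian with $1$; $\mathrm{Nil}(A)$ is the nilradical of $A$ and $A_{\rm red}=A/\mathrm{Nil}(A)$. A valuation on a ring $R$ is a map $\nu:R\to\Gamma\cup\{\infty\}$ ($\Gamma$ an ordered abelian group) with $\nu(ab)=\nu(a)+\nu(b)$, $\nu(a+b)\ge\min\{\nu(a),\nu(b)\}$, $\nu(1)=0$, $\nu(0)=\infty$, whose support $\mathrm{supp}(\nu)=\{a:\nu(a)=\infty\}$ is a minimal prime ideal; it extends to localizations at multiplicative sets disjoint from the support via $\nu(a/s)=\nu(a)-\nu(s)$ and restricts to subrings, implicitly. $\nu$ has a center on $R$ if $\nu\ge0$ on $R$; its center is $\mathfrak C_\nu(R)=\{a:\nu(a)>0\}$. $\nu$ is centered on $(R,\mathfrak m)$ if $\nu\ge0$ on $R$ and $\nu>0$ on $\mathfrak m$. Local blowing up: for $b\in R\setminus\mathrm{supp}(\nu)$ let $J(b)=\bigcup_{i\ge1}\mathrm{ann}_R(b^i)$, so $R/J(b)\subseteq R_b$. Given $a_1,\ldots,a_r\in R$ with $\nu(a_i)\ge\nu(b)$, let $R'=(R/J(b))[a_1/b,\ldots,a_r/b]\subseteq R_b$ and $R^{(1)}=R'_{\mathfrak C_\nu(R')}$; the canonical map $R\to R^{(1)}$ is the local blowing up of $R$ with respect to $\nu$ along $(b,a_1,\ldots,a_r)$. (Here $\mathrm{supp}(\nu)=I$, $J(b)=0$, and $\nu(y_i)=\infty$ since $y_i$ is nilpotent.) *)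

theory Defs
  imports "HOL-Algebra.Ring_Divisibility" "HOL-Algebra.Ideal_Product" "HOL-Algebra.Generated_Rings"
    "HOL-Library.Extended"
begin

definition nilrad :: "('a, 'b) ring_scheme \<Rightarrow> 'a set" where
  "nilrad R = {a \<in> carrier R. \<exists>k::nat. a [^]\<^bsub>R\<^esub> k = \<zero>\<^bsub>R\<^esub>}"

definition ann :: "('a, 'b) ring_scheme \<Rightarrow> 'a \<Rightarrow> 'a set" where
  "ann R x = {a \<in> carrier R. a \<otimes>\<^bsub>R\<^esub> x = \<zero>\<^bsub>R\<^esub>}"

definition ass_primes :: "('a, 'b) ring_scheme \<Rightarrow> 'a set set" where
  "ass_primes R = {P. primeideal P R \<and> (\<exists>x \<in> carrier R. P = ann R x)}"

definition minimal_prime :: "('a, 'b) ring_scheme \<Rightarrow> 'a set \<Rightarrow> bool" where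
  "minimal_prime R P \<longleftrightarrow> primeideal P R \<and>
     (\<forall>Q. primeideal Q R \<and> Q \<subseteq> P \<longrightarrow> Q = P)"

definition local_ring :: "('a, 'b) ring_scheme \<Rightarrow> 'a set \<Rightarrow> bool" where
  "local_ring R m \<longleftrightarrow> cring R \<and> maximalideal m R \<and> (\<forall>J. maximalideal J R \<longrightarrow> J = m)"

fun ideal_pow :: "('a, 'b) ring_scheme \<Rightarrow> 'a set \<Rightarrow> nat \<Rightarrow> 'a set" where
  "ideal_pow R I 0 = carrier R"
| "ideal_pow R I (Suc k) = ideal_prod R I (ideal_pow R I k)"

text \<open>Values lie in \<Gamma> \<union> {\<infinity>}, modelled as the type 'g extended (Fin g | Pinf),
  with Minf excluded; Pinf plays the role of \<infinity>.\<close>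
definition valuation :: "('a, 'b) ring_scheme \<Rightarrow> ('a \<Rightarrow> 'g::linordered_ab_group_add extended) \<Rightarrow> bool" where
  "valuation R \<nu> \<longleftrightarrow>
     (\<forall>a \<in> carrier R. \<nu> a \<noteq> Minf) \<and>
     (\<forall>a \<in> carrier R. \<forall>c \<in> carrier R. \<nu> (a \<otimes>\<^bsub>R\<^esub> c) = \<nu> a + \<nu> c) \<and>
     (\<forall>a \<in> carrier R. \<forall>c \<in> carrier R. \<nu> (a \<oplus>\<^bsub>R\<^esub> c) \<ge> min (\<nu> a) (\<nu> c)) \<and>
     \<nu> \<one>\<^bsub>R\<^esub> = 0 \<and> \<nu> \<zero>\<^bsub>R\<^esub> = Pinf \<and>
     minimal_prime R {a \<in> carrier R. \<nu> a = Pinf}"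

definition centered_on :: "('a, 'b) ring_scheme \<Rightarrow> 'a set \<Rightarrow> ('a \<Rightarrow> 'g::linordered_ab_group_add extended) \<Rightarrow> bool" where
  "centered_on R m \<nu> \<longleftrightarrow> (\<forall>a \<in> carrier R. \<nu> a \<ge> 0) \<and> (\<forall>a \<in> m. \<nu> a > 0)"

definition loc_rel :: "('a, 'b) ring_scheme \<Rightarrow> 'a set \<Rightarrow> (('a \<times> 'a) \<times> ('a \<times> 'a)) set" where
  "loc_rel R M = {((a, s), (a', s')). a \<in> carrier R \<and> a' \<in> carrier R \<and> s \<in> M \<and> s' \<in> M \<and>
      (\<exists>t \<in> M. t \<otimes>\<^bsub>R\<^esub> ((a \<otimes>\<^bsub>R\<^esub> s') \<ominus>\<^bsub>R\<^esub> (a' \<otimes>\<^bsub>R\<^esub> s)) = \<zero>\<^bsub>R\<^esub>)}"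

definition frac :: "('a, 'b) ring_scheme \<Rightarrow> 'a set \<Rightarrow> 'a \<Rightarrow> 'a \<Rightarrow> ('a \<times> 'a) set" where
  "frac R M a s = loc_rel R M `` {(a, s)}"

definition loc_ring :: "('a, 'b) ring_scheme \<Rightarrow> 'a set \<Rightarrow> ('a \<times> 'a) set ring" where
  "loc_ring R M = \<lparr> carrier = {frac R M a s | a s. a \<in> carrier R \<and> s \<in> M},
     mult = (\<lambda>X Y. \<Union>{frac R M (fst p \<otimes>\<^bsub>R\<^esub> fst q) (snd p \<otimes>\<^bsub>R\<^esub> snd q) | p q. p \<in> X \<and> q \<in> Y}),
     one = frac R M \<one>\<^bsub>R\<^esub> \<one>\<^bsub>R\<^esub>,
     zero = frac R M \<zero>\<^bsub>R\<^esub> \<one>\<^bsub>R\<^esub>,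
     add = (\<lambda>X Y. \<Union>{frac R M ((fst p \<otimes>\<^bsub>R\<^esub> snd q) \<oplus>\<^bsub>R\<^esub> (fst q \<otimes>\<^bsub>R\<^esub> snd p)) (snd p \<otimes>\<^bsub>R\<^esub> snd q)
                        | p q. p \<in> X \<and> q \<in> Y}) \<rparr>"

definition powers :: "('a, 'b) ring_scheme \<Rightarrow> 'a \<Rightarrow> 'a set" where
  "powers R b = {b [^]\<^bsub>R\<^esub> (k::nat) | k. True}"

text \<open>R' = (R/J(b))[a_1/b,...,a_r/b], realised as the subring of R_b generated by the image
  of R and the fractions a/b, a \<in> A.\<close>
definition blowup_R' :: "('a, 'b) ring_scheme \<Rightarrow> 'a \<Rightarrow> 'a set \<Rightarrow> ('a \<times> 'a) set ring" where
  "blowup_R' R b A = (loc_ring R (powers R b)) \<lparr> carrier :=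
      generate_ring (loc_ring R (powers R b))
        ((\<lambda>x. frac R (powers R b) x \<one>\<^bsub>R\<^esub>) ` carrier R \<union> (\<lambda>a. frac R (powers R b) a b) ` A) \<rparr>"

definition blowup_center :: "('a, 'b) ring_scheme \<Rightarrow> ('a \<Rightarrow> 'g::linordered_ab_group_add extended)
     \<Rightarrow> 'a \<Rightarrow> 'a set \<Rightarrow> ('a \<times> 'a) set set" where
  "blowup_center R \<nu> b A = {X \<in> carrier (blowup_R' R b A).
      \<exists>a k. a \<in> carrier R \<and> (a, b [^]\<^bsub>R\<^esub> (k::nat)) \<in> X \<and> \<nu> (b [^]\<^bsub>R\<^esub> k) < \<nu> a}"

definition blowup_ring :: "('a, 'b) ring_scheme \<Rightarrow> ('a \<Rightarrow> 'g::linordered_ab_group_add extended)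
     \<Rightarrow> 'a \<Rightarrow> 'a set \<Rightarrow> (('a \<times> 'a) set \<times> ('a \<times> 'a) set) set ring" where
  "blowup_ring R \<nu> b A = loc_ring (blowup_R' R b A) (carrier (blowup_R' R b A) - blowup_center R \<nu> b A)"

definition blowup_map :: "('a, 'b) ring_scheme \<Rightarrow> ('a \<Rightarrow> 'g::linordered_ab_group_add extended)
     \<Rightarrow> 'a \<Rightarrow> 'a set \<Rightarrow> 'a \<Rightarrow> (('a \<times> 'a) set \<times> ('a \<times> 'a) set) set" where
  "blowup_map R \<nu> b A x = frac (blowup_R' R b A) (carrier (blowup_R' R b A) - blowup_center R \<nu> b A)
      (frac R (powers R b) x \<one>\<^bsub>R\<^esub>) \<one>\<^bsub>blowup_R' R b A\<^esub>"

definition blowup_quot :: "('a, 'b) ring_scheme \<Rightarrow> ('a \<Rightarrow> 'g::linordered_ab_group_add extended)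
     \<Rightarrow> 'a \<Rightarrow> 'a set \<Rightarrow> 'a \<Rightarrow> (('a \<times> 'a) set \<times> ('a \<times> 'a) set) set" where
  "blowup_quot R \<nu> b A a = frac (blowup_R' R b A) (carrier (blowup_R' R b A) - blowup_center R \<nu> b A)
      (frac R (powers R b) a b) \<one>\<^bsub>blowup_R' R b A\<^esub>"

end

theory Submission
  imports Defs
begin

text \<open>Write \<open>c\<^sub>i = V\<^sub>i/T\<close> with \<open>V\<^sub>i\<close> in \<open>R' = R[y/b] \<subseteq> R\<^sub>b\<close> and \<open>T\<close> outside the
  center \<open>C\<close> of \<open>\<nu>\<close> on \<open>R'\<close>. A relation \<open>\<Sum> c\<^sub>i y\<^sub>i\<^sup>(\<^sup>1\<^sup>) \<in> I\<^sub>(\<^sub>1\<^sub>)\<^sup>n\<^sup>+\<^sup>1\<close> then yields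
  \<open>w \<notin> C\<close> with \<open>\<Sum> (w V\<^sub>i)(y\<^sub>i/b) \<in> I\<^sup>n\<^sup>+\<^sup>1 R\<^sub>b\<close>. Since the generators \<open>y\<^sub>i/b\<close> of \<open>R'\<close> over \<open>R\<close>
  lie in \<open>I\<^sup>n R\<^sub>b\<close>, each \<open>w V\<^sub>i\<close> is \<open>a\<^sub>i + N\<^sub>i\<close> with \<open>a\<^sub>i \<in> R\<close> and \<open>N\<^sub>i \<in> I\<^sup>n R\<^sub>b\<close>; the terms
  \<open>N\<^sub>i y\<^sub>i/b \<in> I\<^sup>2\<^sup>n R\<^sub>b\<close> are negligible, so \<open>\<beta> \<Sum> a\<^sub>i y\<^sub>i \<in> I\<^sup>n\<^sup>+\<^sup>1\<close> for a power \<open>\<beta>\<close> of \<open>b\<close>.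
  Independence gives \<open>\<beta> a\<^sub>i \<in> I\<close>, hence \<open>a\<^sub>i \<in> I\<close> as \<open>I\<close> is prime and \<open>b \<notin> I\<close>. So \<open>w V\<^sub>i\<close>
  is nilpotent, and so is \<open>c\<^sub>i\<close> because \<open>w\<close> becomes invertible in \<open>R\<^sup>(\<^sup>1\<^sup>)\<close>.\<close>

section \<open>Localization of a commutative ring\<close>

locale localization = cring R + M: submonoid M R for R (structure) and M
begin

lemma M_carrier: "s \<in> M \<Longrightarrow> s \<in> carrier R"
  using M.subset by blast

lemma loc_rel_iff:
  "((a, s), (a', s')) \<in> loc_rel R M \<longleftrightarrow> a \<in> carrier R \<and> a' \<in> carrier R \<and> s \<in> M \<and> s' \<in> M \<and>
     (\<exists>t\<in>M. t \<otimes> (a \<otimes> s') = t \<otimes> (a' \<otimes> s))"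
proof -
  have "t \<otimes> (a \<otimes> s' \<ominus> a' \<otimes> s) = \<zero> \<longleftrightarrow> t \<otimes> (a \<otimes> s') = t \<otimes> (a' \<otimes> s)"
    if "a \<in> carrier R" "a' \<in> carrier R" "s \<in> M" "s' \<in> M" "t \<in> M" for t
  proof -
    have "t \<otimes> (a \<otimes> s' \<ominus> a' \<otimes> s) = t \<otimes> (a \<otimes> s') \<ominus> t \<otimes> (a' \<otimes> s)"
      using that M_carrier by algebra
    then show ?thesis using that M_carrier by (simp add: r_right_minus_eq)
  qed
  then show ?thesis unfolding loc_rel_def by blast
qed

lemma loc_rel_equiv: "equiv (carrier R \<times> M) (loc_rel R M)"
proof (rule equivI)
  show "loc_rel R M \<subseteq> (carrier R \<times> M) \<times> carrier R \<times> M"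
    unfolding loc_rel_def by blast
  show "refl_on (carrier R \<times> M) (loc_rel R M)"
    by (rule refl_onI) (auto simp: loc_rel_iff)
  show "sym (loc_rel R M)"
    by (rule symI) (clarsimp simp: loc_rel_iff, metis)
  show "trans (loc_rel R M)"
  proof (rule transI)
    fix x y z assume xy: "(x, y) \<in> loc_rel R M" and yz: "(y, z) \<in> loc_rel R M"
    obtain a s a' s' a'' s'' where xyz: "x = (a, s)" "y = (a', s')" "z = (a'', s'')"
      by (cases x, cases y, cases z)
    from xy obtain t where t: "t \<in> M" "t \<otimes> (a \<otimes> s') = t \<otimes> (a' \<otimes> s)"
      and c1: "a \<in> carrier R" "a' \<in> carrier R" "s \<in> M" "s' \<in> M"
      unfolding xyz loc_rel_iff by blast
    from yz obtain u where u: "u \<in> M" "u \<otimes> (a' \<otimes> s'') = u \<otimes> (a'' \<otimes> s')"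
      and c2: "a'' \<in> carrier R" "s'' \<in> M"
      unfolding xyz loc_rel_iff by blast
    have c: "s \<in> carrier R" "s' \<in> carrier R" "s'' \<in> carrier R" "t \<in> carrier R" "u \<in> carrier R"
      using c1 c2 t u M_carrier by simp_all
    have "(t \<otimes> u \<otimes> s') \<otimes> (a \<otimes> s'') = (t \<otimes> (a \<otimes> s')) \<otimes> (u \<otimes> s'')"
      using c1 c2 c by algebra
    also have "\<dots> = (u \<otimes> (a' \<otimes> s'')) \<otimes> (t \<otimes> s)"
      unfolding t(2) using c1 c2 c by algebra
    also have "\<dots> = (t \<otimes> u \<otimes> s') \<otimes> (a'' \<otimes> s)"
      unfolding u(2) using c1 c2 c by algebra
    finally show "(x, z) \<in> loc_rel R M"
      unfolding xyz loc_rel_iff using c1 c2 t(1) u(1) by blast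
  qed
qed

lemma frac_eq_iff:
  "a \<in> carrier R \<Longrightarrow> a' \<in> carrier R \<Longrightarrow> s \<in> M \<Longrightarrow> s' \<in> M \<Longrightarrow>
     frac R M a s = frac R M a' s' \<longleftrightarrow> (\<exists>t\<in>M. t \<otimes> (a \<otimes> s') = t \<otimes> (a' \<otimes> s))"
  unfolding frac_def
  by (subst eq_equiv_class_iff[OF loc_rel_equiv]) (simp_all add: loc_rel_iff)

lemma frac_eqI:
  "a \<in> carrier R \<Longrightarrow> a' \<in> carrier R \<Longrightarrow> s \<in> M \<Longrightarrow> s' \<in> M \<Longrightarrow> a \<otimes> s' = a' \<otimes> s \<Longrightarrow>
     frac R M a s = frac R M a' s'"
  by (subst frac_eq_iff) (auto intro: bexI[of _ \<one>])

lemma frac_refl: "a \<in> carrier R \<Longrightarrow> s \<in> M \<Longrightarrow> (a, s) \<in> frac R M a s"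
  unfolding frac_def by (rule equiv_class_self[OF loc_rel_equiv]) simp

lemma frac_of_mem:
  assumes p: "p \<in> frac R M a s" and c: "a \<in> carrier R" "s \<in> M"
  shows "frac R M (fst p) (snd p) = frac R M a s \<and> fst p \<in> carrier R \<and> snd p \<in> M"
proof -
  obtain a' s' where pp: "p = (a', s')" by (cases p)
  have r: "((a, s), (a', s')) \<in> loc_rel R M" using p unfolding frac_def pp by simp
  then have c': "a' \<in> carrier R" "s' \<in> M" unfolding loc_rel_iff by blast+
  have "frac R M a s = frac R M a' s'" unfolding frac_def
    using r c c' by (simp add: eq_equiv_class_iff[OF loc_rel_equiv])
  then show ?thesis using pp c' by simp
qed

lemma frac_mult_cancel:
  "a \<in> carrier R \<Longrightarrow> s \<in> M \<Longrightarrow> u \<in> M \<Longrightarrow> frac R M (a \<otimes> u) (s \<otimes> u) = frac R M a s"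
  by (rule frac_eqI) (use M_carrier in \<open>simp_all add: m_ac\<close>)

lemma frac_mult_compat:
  assumes c: "a \<in> carrier R" "a' \<in> carrier R" "c \<in> carrier R" "c' \<in> carrier R"
    "s \<in> M" "s' \<in> M" "t \<in> M" "t' \<in> M"
    and e: "frac R M a s = frac R M a' s'" "frac R M c t = frac R M c' t'"
  shows "frac R M (a \<otimes> c) (s \<otimes> t) = frac R M (a' \<otimes> c') (s' \<otimes> t')"
proof -
  obtain u where u: "u \<in> M" "u \<otimes> (a \<otimes> s') = u \<otimes> (a' \<otimes> s)"
    using e(1) unfolding frac_eq_iff[OF c(1,2,5,6)] by blast
  obtain v where v: "v \<in> M" "v \<otimes> (c \<otimes> t') = v \<otimes> (c' \<otimes> t)"
    using e(2) unfolding frac_eq_iff[OF c(3,4,7,8)] by blast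
  have cc: "s \<in> carrier R" "s' \<in> carrier R" "t \<in> carrier R" "t' \<in> carrier R"
    "u \<in> carrier R" "v \<in> carrier R"
    using c u v M_carrier by auto
  have "(u \<otimes> v) \<otimes> ((a \<otimes> c) \<otimes> (s' \<otimes> t')) = (u \<otimes> (a \<otimes> s')) \<otimes> (v \<otimes> (c \<otimes> t'))"
    using c cc by algebra
  also have "\<dots> = (u \<otimes> v) \<otimes> ((a' \<otimes> c') \<otimes> (s \<otimes> t))"
    unfolding u(2) v(2) using c cc by algebra
  finally show ?thesis
    using u(1) v(1) c by (subst frac_eq_iff) (auto intro!: bexI[of _ "u \<otimes> v"])
qed

lemma frac_add_compat:
  assumes c: "a \<in> carrier R" "a' \<in> carrier R" "c \<in> carrier R" "c' \<in> carrier R"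
    "s \<in> M" "s' \<in> M" "t \<in> M" "t' \<in> M"
    and e: "frac R M a s = frac R M a' s'" "frac R M c t = frac R M c' t'"
  shows "frac R M ((a \<otimes> t) \<oplus> (c \<otimes> s)) (s \<otimes> t) = frac R M ((a' \<otimes> t') \<oplus> (c' \<otimes> s')) (s' \<otimes> t')"
proof -
  obtain u where u: "u \<in> M" "u \<otimes> (a \<otimes> s') = u \<otimes> (a' \<otimes> s)"
    using e(1) unfolding frac_eq_iff[OF c(1,2,5,6)] by blast
  obtain v where v: "v \<in> M" "v \<otimes> (c \<otimes> t') = v \<otimes> (c' \<otimes> t)"
    using e(2) unfolding frac_eq_iff[OF c(3,4,7,8)] by blast
  have cc: "s \<in> carrier R" "s' \<in> carrier R" "t \<in> carrier R" "t' \<in> carrier R"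
    "u \<in> carrier R" "v \<in> carrier R"
    using c u v M_carrier by auto
  have "(u \<otimes> v) \<otimes> (((a \<otimes> t) \<oplus> (c \<otimes> s)) \<otimes> (s' \<otimes> t')) =
      (u \<otimes> (a \<otimes> s')) \<otimes> (v \<otimes> t \<otimes> t') \<oplus> (v \<otimes> (c \<otimes> t')) \<otimes> (u \<otimes> s \<otimes> s')"
    using c cc by algebra
  also have "\<dots> = (u \<otimes> v) \<otimes> (((a' \<otimes> t') \<oplus> (c' \<otimes> s')) \<otimes> (s \<otimes> t))"
    unfolding u(2) v(2) using c cc by algebra
  finally show ?thesis
    using u(1) v(1) c cc by (subst frac_eq_iff) (auto intro!: bexI[of _ "u \<otimes> v"])
qed

lemma loc_ring_carrier: "carrier (loc_ring R M) = {frac R M a s | a s. a \<in> carrier R \<and> s \<in> M}"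
  by (simp add: loc_ring_def)

lemma loc_ring_zero: "\<zero>\<^bsub>loc_ring R M\<^esub> = frac R M \<zero> \<one>"
  by (simp add: loc_ring_def)

lemma loc_ring_one: "\<one>\<^bsub>loc_ring R M\<^esub> = frac R M \<one> \<one>"
  by (simp add: loc_ring_def)

lemma frac_closed: "a \<in> carrier R \<Longrightarrow> s \<in> M \<Longrightarrow> frac R M a s \<in> carrier (loc_ring R M)"
  by (auto simp: loc_ring_carrier)

lemma loc_ring_carrierE:
  assumes "X \<in> carrier (loc_ring R M)"
  obtains a s where "X = frac R M a s" "a \<in> carrier R" "s \<in> M"
  using assms by (auto simp: loc_ring_carrier)

text \<open>Multiplication and addition on the localization are defined as unions over all
  representatives; each of these unions collapses to a single class.\<close>

lemma mult_frac:
  assumes c: "a \<in> carrier R" "c \<in> carrier R" "s \<in> M" "t \<in> M"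
  shows "frac R M a s \<otimes>\<^bsub>loc_ring R M\<^esub> frac R M c t = frac R M (a \<otimes> c) (s \<otimes> t)"
proof -
  let ?U = "{frac R M (fst p \<otimes> fst q) (snd p \<otimes> snd q) | p q. p \<in> frac R M a s \<and> q \<in> frac R M c t}"
  have "X = frac R M (a \<otimes> c) (s \<otimes> t)" if "X \<in> ?U" for X
  proof -
    obtain p q where X: "X = frac R M (fst p \<otimes> fst q) (snd p \<otimes> snd q)"
      and p: "p \<in> frac R M a s" and q: "q \<in> frac R M c t" using \<open>X \<in> ?U\<close> by blast
    from frac_of_mem[OF p c(1,3)] frac_of_mem[OF q c(2,4)] show ?thesis
      unfolding X using frac_mult_compat[OF _ c(1) _ c(2) _ c(3) _ c(4)] by metis
  qed
  moreover have "?U \<noteq> {}" using frac_refl c by blast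
  ultimately have "\<Union>?U = frac R M (a \<otimes> c) (s \<otimes> t)" by blast
  then show ?thesis by (simp add: loc_ring_def)
qed

lemma add_frac:
  assumes c: "a \<in> carrier R" "c \<in> carrier R" "s \<in> M" "t \<in> M"
  shows "frac R M a s \<oplus>\<^bsub>loc_ring R M\<^esub> frac R M c t = frac R M ((a \<otimes> t) \<oplus> (c \<otimes> s)) (s \<otimes> t)"
proof -
  let ?U = "{frac R M ((fst p \<otimes> snd q) \<oplus> (fst q \<otimes> snd p)) (snd p \<otimes> snd q)
              | p q. p \<in> frac R M a s \<and> q \<in> frac R M c t}"
  have "X = frac R M ((a \<otimes> t) \<oplus> (c \<otimes> s)) (s \<otimes> t)" if "X \<in> ?U" for X
  proof -
    obtain p q where X: "X = frac R M ((fst p \<otimes> snd q) \<oplus> (fst q \<otimes> snd p)) (snd p \<otimes> snd q)"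
      and p: "p \<in> frac R M a s" and q: "q \<in> frac R M c t" using \<open>X \<in> ?U\<close> by blast
    from frac_of_mem[OF p c(1,3)] frac_of_mem[OF q c(2,4)] show ?thesis
      unfolding X using frac_add_compat[OF _ c(1) _ c(2) _ c(3) _ c(4)] by metis
  qed
  moreover have "?U \<noteq> {}" using frac_refl c by blast
  ultimately have "\<Union>?U = frac R M ((a \<otimes> t) \<oplus> (c \<otimes> s)) (s \<otimes> t)" by blast
  then show ?thesis by (simp add: loc_ring_def)
qed

lemma loc_ring_abelian_group: "abelian_group (loc_ring R M)"
proof (rule abelian_groupI)
  fix x y assume x: "x \<in> carrier (loc_ring R M)" and y: "y \<in> carrier (loc_ring R M)"
  obtain a s where xa: "x = frac R M a s" "a \<in> carrier R" "s \<in> M" using x by (rule loc_ring_carrierE)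
  obtain c t where yc: "y = frac R M c t" "c \<in> carrier R" "t \<in> M" using y by (rule loc_ring_carrierE)
  have cc: "s \<in> carrier R" "t \<in> carrier R" using xa yc M_carrier by auto
  show "x \<oplus>\<^bsub>loc_ring R M\<^esub> y \<in> carrier (loc_ring R M)"
    unfolding xa yc add_frac[OF xa(2) yc(2) xa(3) yc(3)]
    by (rule frac_closed) (use xa yc cc in simp_all)
  show "x \<oplus>\<^bsub>loc_ring R M\<^esub> y = y \<oplus>\<^bsub>loc_ring R M\<^esub> x"
    unfolding xa yc add_frac[OF xa(2) yc(2) xa(3) yc(3)] add_frac[OF yc(2) xa(2) yc(3) xa(3)]
    by (rule frac_eqI) (use xa yc cc in simp_all, (use xa yc cc in algebra)?)
next
  show "\<zero>\<^bsub>loc_ring R M\<^esub> \<in> carrier (loc_ring R M)"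
    unfolding loc_ring_zero by (rule frac_closed) simp_all
next
  fix x y z
  assume x: "x \<in> carrier (loc_ring R M)" and y: "y \<in> carrier (loc_ring R M)"
    and z: "z \<in> carrier (loc_ring R M)"
  obtain a s where xa: "x = frac R M a s" "a \<in> carrier R" "s \<in> M" using x by (rule loc_ring_carrierE)
  obtain c t where yc: "y = frac R M c t" "c \<in> carrier R" "t \<in> M" using y by (rule loc_ring_carrierE)
  obtain e u where ze: "z = frac R M e u" "e \<in> carrier R" "u \<in> M" using z by (rule loc_ring_carrierE)
  have cc: "s \<in> carrier R" "t \<in> carrier R" "u \<in> carrier R" using xa yc ze M_carrier by auto
  have c1: "a \<otimes> t \<oplus> c \<otimes> s \<in> carrier R" "s \<otimes> t \<in> M" "c \<otimes> u \<oplus> e \<otimes> t \<in> carrier R" "t \<otimes> u \<in> M"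
    using xa yc ze cc by simp_all
  show "x \<oplus>\<^bsub>loc_ring R M\<^esub> y \<oplus>\<^bsub>loc_ring R M\<^esub> z = x \<oplus>\<^bsub>loc_ring R M\<^esub> (y \<oplus>\<^bsub>loc_ring R M\<^esub> z)"
    unfolding xa yc ze add_frac[OF xa(2) yc(2) xa(3) yc(3)] add_frac[OF yc(2) ze(2) yc(3) ze(3)]
      add_frac[OF c1(1) ze(2) c1(2) ze(3)] add_frac[OF xa(2) c1(3) xa(3) c1(4)]
    by (rule frac_eqI) (use xa yc ze cc in simp_all, (use xa yc ze cc in algebra)?)
next
  fix x assume x: "x \<in> carrier (loc_ring R M)"
  obtain a s where xa: "x = frac R M a s" "a \<in> carrier R" "s \<in> M" using x by (rule loc_ring_carrierE)
  have cc: "s \<in> carrier R" using xa M_carrier by auto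
  show "\<zero>\<^bsub>loc_ring R M\<^esub> \<oplus>\<^bsub>loc_ring R M\<^esub> x = x"
    unfolding xa loc_ring_zero add_frac[OF zero_closed xa(2) M.one_closed xa(3)]
    by (rule frac_eqI) (use xa cc in simp_all, (use xa cc in algebra)?)
  have na: "\<ominus> a \<in> carrier R" using xa by simp
  have "frac R M (\<ominus> a) s \<oplus>\<^bsub>loc_ring R M\<^esub> x = \<zero>\<^bsub>loc_ring R M\<^esub>"
    unfolding xa loc_ring_zero add_frac[OF na xa(2) xa(3) xa(3)]
    by (rule frac_eqI) (use xa cc in simp_all, (use xa cc in algebra)?)
  moreover have "frac R M (\<ominus> a) s \<in> carrier (loc_ring R M)" using na xa(3) by (rule frac_closed)
  ultimately show "\<exists>y\<in>carrier (loc_ring R M). y \<oplus>\<^bsub>loc_ring R M\<^esub> x = \<zero>\<^bsub>loc_ring R M\<^esub>" by blast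
qed

lemma loc_ring_comm_monoid: "comm_monoid (loc_ring R M)"
proof (rule comm_monoidI)
  fix x y assume x: "x \<in> carrier (loc_ring R M)" and y: "y \<in> carrier (loc_ring R M)"
  obtain a s where xa: "x = frac R M a s" "a \<in> carrier R" "s \<in> M" using x by (rule loc_ring_carrierE)
  obtain c t where yc: "y = frac R M c t" "c \<in> carrier R" "t \<in> M" using y by (rule loc_ring_carrierE)
  have cc: "s \<in> carrier R" "t \<in> carrier R" using xa yc M_carrier by auto
  show "x \<otimes>\<^bsub>loc_ring R M\<^esub> y \<in> carrier (loc_ring R M)"
    unfolding xa yc mult_frac[OF xa(2) yc(2) xa(3) yc(3)]
    by (rule frac_closed) (use xa yc in simp_all)
  show "x \<otimes>\<^bsub>loc_ring R M\<^esub> y = y \<otimes>\<^bsub>loc_ring R M\<^esub> x"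
    unfolding xa yc mult_frac[OF xa(2) yc(2) xa(3) yc(3)] mult_frac[OF yc(2) xa(2) yc(3) xa(3)]
    by (rule frac_eqI) (use xa yc cc in simp_all, (use xa yc cc in algebra)?)
next
  show "\<one>\<^bsub>loc_ring R M\<^esub> \<in> carrier (loc_ring R M)"
    unfolding loc_ring_one by (rule frac_closed) simp_all
next
  fix x y z
  assume x: "x \<in> carrier (loc_ring R M)" and y: "y \<in> carrier (loc_ring R M)"
    and z: "z \<in> carrier (loc_ring R M)"
  obtain a s where xa: "x = frac R M a s" "a \<in> carrier R" "s \<in> M" using x by (rule loc_ring_carrierE)
  obtain c t where yc: "y = frac R M c t" "c \<in> carrier R" "t \<in> M" using y by (rule loc_ring_carrierE)
  obtain e u where ze: "z = frac R M e u" "e \<in> carrier R" "u \<in> M" using z by (rule loc_ring_carrierE)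
  have cc: "s \<in> carrier R" "t \<in> carrier R" "u \<in> carrier R" using xa yc ze M_carrier by auto
  have c1: "a \<otimes> c \<in> carrier R" "s \<otimes> t \<in> M" "c \<otimes> e \<in> carrier R" "t \<otimes> u \<in> M"
    using xa yc ze by simp_all
  show "x \<otimes>\<^bsub>loc_ring R M\<^esub> y \<otimes>\<^bsub>loc_ring R M\<^esub> z = x \<otimes>\<^bsub>loc_ring R M\<^esub> (y \<otimes>\<^bsub>loc_ring R M\<^esub> z)"
    unfolding xa yc ze mult_frac[OF xa(2) yc(2) xa(3) yc(3)] mult_frac[OF yc(2) ze(2) yc(3) ze(3)]
      mult_frac[OF c1(1) ze(2) c1(2) ze(3)] mult_frac[OF xa(2) c1(3) xa(3) c1(4)]
    by (rule frac_eqI) (use xa yc ze cc in simp_all, (use xa yc ze cc in algebra)?)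
next
  fix x assume x: "x \<in> carrier (loc_ring R M)"
  obtain a s where xa: "x = frac R M a s" "a \<in> carrier R" "s \<in> M" using x by (rule loc_ring_carrierE)
  have cc: "s \<in> carrier R" using xa M_carrier by auto
  show "\<one>\<^bsub>loc_ring R M\<^esub> \<otimes>\<^bsub>loc_ring R M\<^esub> x = x"
    unfolding xa loc_ring_one mult_frac[OF one_closed xa(2) M.one_closed xa(3)]
    by (rule frac_eqI) (use xa cc in simp_all, (use xa cc in algebra)?)
qed

lemma loc_ring_cring: "cring (loc_ring R M)"
proof (rule cringI[OF loc_ring_abelian_group loc_ring_comm_monoid])
  fix x y z
  assume x: "x \<in> carrier (loc_ring R M)" and y: "y \<in> carrier (loc_ring R M)"
    and z: "z \<in> carrier (loc_ring R M)"
  obtain a s where xa: "x = frac R M a s" "a \<in> carrier R" "s \<in> M" using x by (rule loc_ring_carrierE)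
  obtain c t where yc: "y = frac R M c t" "c \<in> carrier R" "t \<in> M" using y by (rule loc_ring_carrierE)
  obtain e u where ze: "z = frac R M e u" "e \<in> carrier R" "u \<in> M" using z by (rule loc_ring_carrierE)
  have cc: "s \<in> carrier R" "t \<in> carrier R" "u \<in> carrier R" using xa yc ze M_carrier by auto
  have c1: "a \<otimes> t \<oplus> c \<otimes> s \<in> carrier R" "s \<otimes> t \<in> M" "a \<otimes> e \<in> carrier R" "s \<otimes> u \<in> M"
    "c \<otimes> e \<in> carrier R" "t \<otimes> u \<in> M"
    using xa yc ze cc by simp_all
  show "(x \<oplus>\<^bsub>loc_ring R M\<^esub> y) \<otimes>\<^bsub>loc_ring R M\<^esub> z =
      x \<otimes>\<^bsub>loc_ring R M\<^esub> z \<oplus>\<^bsub>loc_ring R M\<^esub> y \<otimes>\<^bsub>loc_ring R M\<^esub> z"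
    unfolding xa yc ze add_frac[OF xa(2) yc(2) xa(3) yc(3)] mult_frac[OF c1(1) ze(2) c1(2) ze(3)]
      mult_frac[OF xa(2) ze(2) xa(3) ze(3)] mult_frac[OF yc(2) ze(2) yc(3) ze(3)]
      add_frac[OF c1(3) c1(5) c1(4) c1(6)]
    by (rule frac_eqI) (use xa yc ze cc in simp_all, (use xa yc ze cc in algebra)?)
qed

sublocale loc: cring "loc_ring R M"
  by (rule loc_ring_cring)

lemma M_pow: "s \<in> M \<Longrightarrow> s [^] (k::nat) \<in> M"
  by (induct k) simp_all

lemma pow_frac:
  assumes "a \<in> carrier R" "s \<in> M"
  shows "frac R M a s [^]\<^bsub>loc_ring R M\<^esub> (k::nat) = frac R M (a [^] k) (s [^] k)"
proof (induct k)
  case 0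
  show ?case by (simp add: loc_ring_one)
next
  case (Suc k)
  then show ?case using mult_frac[OF nat_pow_closed assms(1) M_pow assms(2)] assms by simp
qed

lemma uminus_frac:
  assumes c: "a \<in> carrier R" "s \<in> M"
  shows "\<ominus>\<^bsub>loc_ring R M\<^esub> frac R M a s = frac R M (\<ominus> a) s"
proof -
  have cc: "s \<in> carrier R" using c M_carrier by auto
  have "frac R M (\<ominus> a) s \<oplus>\<^bsub>loc_ring R M\<^esub> frac R M a s = \<zero>\<^bsub>loc_ring R M\<^esub>"
    unfolding loc_ring_zero add_frac[OF a_inv_closed[OF c(1)] c(1) c(2) c(2)]
    by (rule frac_eqI) (use c cc in simp_all, (use c cc in algebra)?)
  then show ?thesis
    by (rule loc.minus_equality) (use c in \<open>simp_all add: frac_closed\<close>)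
qed

lemma common_denominator:
  "finite A \<Longrightarrow> f \<in> A \<rightarrow> carrier (loc_ring R M) \<Longrightarrow>
     \<exists>T\<in>M. \<exists>V. \<forall>i\<in>A. V i \<in> carrier R \<and> f i = frac R M (V i) T"
proof (induction A rule: finite_induct)
  case empty
  show ?case using M.one_closed by blast
next
  case (insert j A)
  obtain T V where T: "T \<in> M" and V: "\<forall>i\<in>A. V i \<in> carrier R \<and> f i = frac R M (V i) T"
    using insert.IH insert.prems by blast
  obtain u t where ut: "f j = frac R M u t" "u \<in> carrier R" "t \<in> M"
    using insert.prems loc_ring_carrierE by blast
  define V' where "V' = (\<lambda>i. if i = j then u \<otimes> T else V i \<otimes> t)"
  have "V' i \<in> carrier R \<and> f i = frac R M (V' i) (T \<otimes> t)" if i: "i \<in> insert j A" for i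
  proof (cases "i = j")
    case True
    have "f i = frac R M (u \<otimes> T) (t \<otimes> T)"
      using True ut T by (simp add: frac_mult_cancel)
    then show ?thesis
      using True ut T M_carrier by (simp add: V'_def m_comm)
  next
    case False
    then have "f i = frac R M (V i \<otimes> t) (T \<otimes> t)"
      using i V T ut by (simp add: frac_mult_cancel)
    then show ?thesis
      using False i V ut M_carrier by (simp add: V'_def)
  qed
  then show ?case using T ut(3) by blast
qed

lemma finsum_frac:
  "finite A \<Longrightarrow> V \<in> A \<rightarrow> carrier R \<Longrightarrow> T \<in> M \<Longrightarrow>
     finsum (loc_ring R M) (\<lambda>i. frac R M (V i) T) A = frac R M (finsum R V A) T"
proof (induction A rule: finite_induct)
  case empty
  show ?case unfolding loc.finsum_empty loc_ring_zero
    by (rule frac_eqI) (use empty M_carrier in simp_all)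
next
  case (insert j A)
  have Tc: "T \<in> carrier R" using insert M_carrier by auto
  have VA: "V \<in> A \<rightarrow> carrier R" "V j \<in> carrier R" using insert by auto
  have sc: "finsum R V A \<in> carrier R" using VA by simp
  have "finsum (loc_ring R M) (\<lambda>i. frac R M (V i) T) (insert j A)
      = frac R M (V j) T \<oplus>\<^bsub>loc_ring R M\<^esub> frac R M (finsum R V A) T"
    using insert VA by (subst loc.finsum_insert) (auto intro: frac_closed)
  also have "\<dots> = frac R M (V j \<otimes> T \<oplus> finsum R V A \<otimes> T) (T \<otimes> T)"
    by (rule add_frac[OF VA(2) sc insert(5) insert(5)])
  also have "\<dots> = frac R M (V j \<oplus> finsum R V A) T"
    by (rule frac_eqI) (use VA sc Tc insert(5) in simp_all, (use VA sc Tc in algebra)?)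
  also have "\<dots> = frac R M (finsum R V (insert j A)) T"
    using finsum_insert[OF insert(1,2)] VA by simp
  finally show ?case .
qed

end

lemma nat_pow_carrier_update: "x [^]\<^bsub>L\<lparr>carrier := K\<rparr>\<^esub> (n::nat) = x [^]\<^bsub>L\<^esub> n"
  by (simp add: nat_pow_def)

lemma finsum_subring:
  assumes L: "ring L" and K: "subring K L" and A: "finite A" and f: "f \<in> A \<rightarrow> K"
  shows "finsum (L\<lparr>carrier := K\<rparr>) f A = finsum L f A"
  using A f
proof (induction A rule: finite_induct)
  case empty
  interpret L: ring L by (rule L)
  interpret K: ring "L\<lparr>carrier := K\<rparr>" using L.subring_iff[OF subringE(1)[OF K]] K by simp
  show ?case by simp
next
  case (insert j A)
  interpret L: ring L by (rule L)
  interpret K: ring "L\<lparr>carrier := K\<rparr>" using L.subring_iff[OF subringE(1)[OF K]] K by simp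
  have fA: "f \<in> A \<rightarrow> K" "f j \<in> K" using insert by auto
  then have fL: "f \<in> A \<rightarrow> carrier L" "f j \<in> carrier L" using subringE(1)[OF K] by auto
  have "finsum (L\<lparr>carrier := K\<rparr>) f (insert j A) = f j \<oplus>\<^bsub>L\<^esub> finsum (L\<lparr>carrier := K\<rparr>) f A"
    using K.finsum_insert[OF insert(1,2)] fA by simp
  also have "\<dots> = finsum L f (insert j A)"
    using insert.IH fA L.finsum_insert[OF insert(1,2) fL] by simp
  finally show ?case .
qed

context cring
begin

lemma ideal_pow_ideal: "ideal I R \<Longrightarrow> ideal (ideal_pow R I k) R"
  by (induct k) (simp_all add: oneideal ideal_prod_is_ideal)

lemma ideal_pow_subset_carrier: "ideal I R \<Longrightarrow> ideal_pow R I k \<subseteq> carrier R"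
  using ideal.Icarr[OF ideal_pow_ideal] by blast

lemma ideal_pow_mult:
  assumes I: "ideal I R" and x: "x \<in> ideal_pow R I k" and y: "y \<in> ideal_pow R I l"
  shows "x \<otimes> y \<in> ideal_pow R I (k + l)"
  using x
proof (induct k arbitrary: x)
  case 0
  then show ?case using ideal.I_l_closed[OF ideal_pow_ideal[OF I] y] by simp
next
  case (Suc k)
  have yc: "y \<in> carrier R" using y ideal_pow_subset_carrier[OF I] by blast
  have "x \<in> ideal_prod R I (ideal_pow R I k)" using Suc.prems by simp
  then show ?case
  proof (induct x rule: ideal_prod.induct)
    case (prod i j)
    have ij: "i \<in> carrier R" "j \<in> carrier R"
      using prod ideal.Icarr[OF I] ideal_pow_subset_carrier[OF I] by auto
    have "i \<otimes> (j \<otimes> y) \<in> ideal_prod R I (ideal_pow R I (k + l))"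
      using prod Suc.hyps by (simp add: ideal_prod.prod)
    then show ?case using ij yc by (simp add: m_assoc)
  next
    case (sum s1 s2)
    have "s1 \<in> carrier R" "s2 \<in> carrier R"
      using sum(1,3) ideal_prod_in_carrier[OF I ideal_pow_ideal[OF I]] by auto
    then show ?case using sum(2,4) yc by (simp add: ideal_prod.sum l_distr)
  qed
qed

lemma ideal_pow_antimono:
  assumes I: "ideal I R" and jk: "j \<le> k"
  shows "ideal_pow R I k \<subseteq> ideal_pow R I j"
  using jk
proof (induct k)
  case (Suc k)
  have "ideal_pow R I (Suc k) \<subseteq> ideal_pow R I k"
    using ideal_prod_inter[OF I ideal_pow_ideal[OF I]] by simp
  then show ?case using Suc by (cases "j = Suc k") auto
qed simp

lemma ideal_pow_1: "ideal I R \<Longrightarrow> ideal_pow R I 1 = I"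
  using ideal_prod_one[of I] by simp

end

lemma (in primeideal) nat_pow_mem_imp_mem:
  "x \<in> carrier R \<Longrightarrow> x [^] (m::nat) \<in> I \<Longrightarrow> x \<in> I"
proof (induct m)
  case 0
  have "\<one> \<in> I" using 0 by simp
  then show ?case using I_notcarr one_imp_carrier by blast
next
  case (Suc m)
  have "x [^] m \<otimes> x \<in> I" using Suc.prems by simp
  then show ?case using I_prime[of "x [^] m" x] Suc by blast
qed

lemma Fin_add_left_cancel:
  "Fin (g::'g::linordered_ab_group_add) + x = Fin g + y \<Longrightarrow> x = y"
  by (cases x; cases y) auto

lemma Fin_less_of_add_eq:
  fixes a a' :: "'g::linordered_ab_group_add extended"
  assumes "Fin B' < a'" "a' + Fin B = a + Fin B'" "a \<noteq> Minf"
  shows "Fin B < a"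
proof (cases a')
  case (Fin x')
  then obtain x where ax: "a = Fin x" using assms by (cases a) auto
  have "B' < x'" "x' + B = x + B'" using assms Fin ax by auto
  then have "B < x" by (metis add_less_cancel_left add.commute)
  then show ?thesis using ax by simp
qed (use assms in \<open>cases a; auto\<close>)+

context ring
begin

lemma valuation_nat_pow_Fin:
  assumes val: "valuation R \<nu>" and a: "a \<in> carrier R" "\<nu> a = Fin x"
  shows "\<exists>g. \<nu> (a [^] (m::nat)) = Fin g"
proof (induct m)
  case 0
  then show ?case using val by (simp add: valuation_def zero_extended_def)
next
  case (Suc m)
  then obtain g where "\<nu> (a [^] m) = Fin g" by blast
  then have "\<nu> (a [^] Suc m) = Fin (g + x)" using val a by (simp add: valuation_def)
  then show ?case by blast
qed

lemma valuation_nilrad: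
  assumes val: "valuation R \<nu>" and a: "a \<in> nilrad R"
  shows "\<nu> a = Pinf"
proof (rule ccontr)
  obtain k where ac: "a \<in> carrier R" and k: "a [^] (k::nat) = \<zero>"
    using a unfolding nilrad_def by blast
  assume "\<nu> a \<noteq> Pinf"
  then obtain x where "\<nu> a = Fin x" using val ac by (cases "\<nu> a") (auto simp: valuation_def)
  then obtain g where "\<nu> (a [^] k) = Fin g" using valuation_nat_pow_Fin[OF val ac] by blast
  then show False using k val by (simp add: valuation_def)
qed

end

lemma (in cring) valuation_support_eq_nilrad:
  assumes val: "valuation R \<nu>" and prime: "primeideal (nilrad R) R"
  shows "{a \<in> carrier R. \<nu> a = Pinf} = nilrad R"
proof -
  have "nilrad R \<subseteq> {a \<in> carrier R. \<nu> a = Pinf}"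
    using valuation_nilrad[OF val] unfolding nilrad_def by auto
  then show ?thesis using val prime unfolding valuation_def minimal_prime_def by blast
qed

section \<open>The local blowing up\<close>

locale blowup_setting = cring R for R :: "'a ring" (structure) +
  fixes \<nu> :: "'a \<Rightarrow> 'g::linordered_ab_group_add extended" and b :: 'a and A :: "'a set" and n :: nat
  assumes nilrad_prime: "primeideal (nilrad R) R" and val: "valuation R \<nu>"
    and b: "b \<in> carrier R" "b \<notin> nilrad R"
    and A: "A \<subseteq> ideal_pow R (nilrad R) n" and n: "1 \<le> n"
begin

abbreviation "Ipow k \<equiv> ideal_pow R (nilrad R) k"

lemma nilrad_ideal: "ideal (nilrad R) R"
  using primeideal.axioms(1)[OF nilrad_prime] .

lemma Ipow_ideal: "ideal (Ipow k) R"
  by (rule ideal_pow_ideal[OF nilrad_ideal])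

lemma Ipow_carrier: "x \<in> Ipow k \<Longrightarrow> x \<in> carrier R"
  using ideal_pow_subset_carrier[OF nilrad_ideal] by blast

lemma A_carrier: "A \<subseteq> carrier R"
  using A Ipow_carrier by blast

lemma nat_pow_in_powers: "b [^] (k::nat) \<in> powers R b"
  unfolding powers_def by blast

lemma powersE: "s \<in> powers R b \<Longrightarrow> (\<And>k::nat. s = b [^] k \<Longrightarrow> P) \<Longrightarrow> P"
  unfolding powers_def by blast

lemma b_in_powers: "b \<in> powers R b"
  using nat_pow_in_powers[of 1] b by simp

lemma powers_submonoid: "submonoid (powers R b) R"
proof
  show "powers R b \<subseteq> carrier R" using b by (auto simp: powers_def)
  show "\<one> \<in> powers R b" using nat_pow_in_powers[of 0] by simp
  fix s t assume "s \<in> powers R b" "t \<in> powers R b"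
  then show "s \<otimes> t \<in> powers R b"
    by (elim powersE) (simp add: b nat_pow_mult nat_pow_in_powers)
qed

sublocale Rb: localization R "powers R b"
  by (intro localization.intro is_cring powers_submonoid)

lemma powers_not_nilrad: "s \<in> powers R b \<Longrightarrow> s \<notin> nilrad R"
  using primeideal.nat_pow_mem_imp_mem[OF nilrad_prime] b by (blast elim: powersE)

lemma val_mult: "x \<in> carrier R \<Longrightarrow> y \<in> carrier R \<Longrightarrow> \<nu> (x \<otimes> y) = \<nu> x + \<nu> y"
  using val unfolding valuation_def by blast

lemma val_not_Minf: "x \<in> carrier R \<Longrightarrow> \<nu> x \<noteq> Minf"
  using val unfolding valuation_def by blast

lemma val_powers_Fin:
  assumes "s \<in> powers R b"
  shows "\<exists>g. \<nu> s = Fin g"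
proof -
  have "\<nu> b \<noteq> Pinf"
    using valuation_support_eq_nilrad[OF val nilrad_prime] b by blast
  then obtain \<beta> where "\<nu> b = Fin \<beta>" using val_not_Minf[OF b(1)] by (cases "\<nu> b") auto
  then show ?thesis
    using assms valuation_nat_pow_Fin[OF val b(1)] by (blast elim: powersE)
qed

lemma val_frac_eq:
  assumes c: "a \<in> carrier R" "a' \<in> carrier R" "s \<in> powers R b" "s' \<in> powers R b"
    and e: "frac R (powers R b) a s = frac R (powers R b) a' s'"
  shows "\<nu> a + \<nu> s' = \<nu> a' + \<nu> s"
proof -
  obtain t where t: "t \<in> powers R b" "t \<otimes> (a \<otimes> s') = t \<otimes> (a' \<otimes> s)"
    using e unfolding Rb.frac_eq_iff[OF c] by blast
  obtain g where g: "\<nu> t = Fin g" using val_powers_Fin[OF t(1)] by blast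
  have "Fin g + (\<nu> a + \<nu> s') = Fin g + (\<nu> a' + \<nu> s)"
    using arg_cong[OF t(2), of \<nu>] c t(1) g Rb.M_carrier by (simp add: val_mult)
  then show ?thesis by (rule Fin_add_left_cancel)
qed

abbreviation "Rb \<equiv> loc_ring R (powers R b)"
abbreviation "R' \<equiv> blowup_R' R b A"
abbreviation "S \<equiv> carrier R' - blowup_center R \<nu> b A"
abbreviation "R1 \<equiv> loc_ring R' S"

abbreviation "R'_gens \<equiv>
  (\<lambda>x. frac R (powers R b) x \<one>) ` carrier R \<union> (\<lambda>a. frac R (powers R b) a b) ` A"

lemma R'_gens_carrier: "R'_gens \<subseteq> carrier Rb"
  using A_carrier b_in_powers by (auto intro: Rb.frac_closed)

lemma R'_carrier: "carrier R' = generate_ring Rb R'_gens"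
  by (simp add: blowup_R'_def)

lemma R'_subring: "subring (carrier R') Rb"
  unfolding R'_carrier by (rule Rb.loc.generate_ring_is_subring[OF R'_gens_carrier])

lemma R'_carrier_Rb: "x \<in> carrier R' \<Longrightarrow> x \<in> carrier Rb"
  using subringE(1)[OF R'_subring] by blast

lemma R'_ops:
  "x \<otimes>\<^bsub>R'\<^esub> y = x \<otimes>\<^bsub>Rb\<^esub> y" "x \<oplus>\<^bsub>R'\<^esub> y = x \<oplus>\<^bsub>Rb\<^esub> y"
  "\<one>\<^bsub>R'\<^esub> = \<one>\<^bsub>Rb\<^esub>" "\<zero>\<^bsub>R'\<^esub> = \<zero>\<^bsub>Rb\<^esub>" "x [^]\<^bsub>R'\<^esub> (k::nat) = x [^]\<^bsub>Rb\<^esub> k"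
  by (simp_all add: blowup_R'_def nat_pow_carrier_update)

lemma R'_cring: "cring R'"
  using Rb.loc.subcring_iff[OF subringE(1)[OF R'_subring]] Rb.loc.subcringI'[OF R'_subring]
  by (simp add: blowup_R'_def)

lemma R'_finsum:
  assumes "finite B" "g \<in> B \<rightarrow> carrier R'"
  shows "finsum R' g B = finsum Rb g B"
proof -
  have "R' = Rb\<lparr>carrier := carrier R'\<rparr>" by (simp add: blowup_R'_def)
  then show ?thesis using finsum_subring[OF Rb.loc.ring_axioms R'_subring assms] by metis
qed

lemma blowup_center_iff:
  assumes c: "a \<in> carrier R" "s \<in> powers R b" "frac R (powers R b) a s \<in> carrier R'"
  shows "frac R (powers R b) a s \<in> blowup_center R \<nu> b A \<longleftrightarrow> \<nu> s < \<nu> a"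
proof
  assume "frac R (powers R b) a s \<in> blowup_center R \<nu> b A"
  then obtain a' k where a': "a' \<in> carrier R" "(a', b [^] (k::nat)) \<in> frac R (powers R b) a s"
    "\<nu> (b [^] k) < \<nu> a'"
    unfolding blowup_center_def by blast
  have "frac R (powers R b) a' (b [^] k) = frac R (powers R b) a s"
    using Rb.frac_of_mem[OF a'(2) c(1,2)] by simp
  then have e: "\<nu> a' + \<nu> s = \<nu> a + \<nu> (b [^] k)"
    using val_frac_eq[OF a'(1) c(1) nat_pow_in_powers c(2)] by simp
  obtain B where B: "\<nu> s = Fin B" using val_powers_Fin[OF c(2)] by blast
  obtain B' where B': "\<nu> (b [^] k) = Fin B'" using val_powers_Fin[OF nat_pow_in_powers] by blast
  show "\<nu> s < \<nu> a" unfolding B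
    by (rule Fin_less_of_add_eq[of B' "\<nu> a'"]) (use a' e B B' val_not_Minf[OF c(1)] in simp_all)
next
  assume lt: "\<nu> s < \<nu> a"
  obtain k where k: "s = b [^] (k::nat)" using c(2) by (rule powersE)
  have "(a, b [^] k) \<in> frac R (powers R b) a s" using Rb.frac_refl[OF c(1,2)] k by simp
  then show "frac R (powers R b) a s \<in> blowup_center R \<nu> b A"
    unfolding blowup_center_def using c(1,3) lt k by blast
qed

lemma S_submonoid: "submonoid S R'"
proof -
  interpret R': cring R' by (rule R'_cring)
  show ?thesis
  proof
    show "S \<subseteq> carrier R'" by blast
  next
    have "frac R (powers R b) \<one> \<one> \<in> carrier R'"
      using R'.one_closed by (simp add: R'_ops Rb.loc_ring_one)
    then show "\<one>\<^bsub>R'\<^esub> \<in> S"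
      using blowup_center_iff[OF one_closed Rb.M.one_closed] by (simp add: R'_ops Rb.loc_ring_one)
  next
    fix X Y assume X: "X \<in> S" and Y: "Y \<in> S"
    obtain a s where xa: "X = frac R (powers R b) a s" "a \<in> carrier R" "s \<in> powers R b"
      using R'_carrier_Rb X by (blast elim: Rb.loc_ring_carrierE)
    obtain c t where yc: "Y = frac R (powers R b) c t" "c \<in> carrier R" "t \<in> powers R b"
      using R'_carrier_Rb Y by (blast elim: Rb.loc_ring_carrierE)
    have XY: "X \<otimes>\<^bsub>R'\<^esub> Y \<in> carrier R'" using X Y R'.m_closed by blast
    have "\<nu> a \<le> \<nu> s"
      using X blowup_center_iff[OF xa(2,3)] unfolding xa(1) by (simp add: not_less)
    moreover have "\<nu> c \<le> \<nu> t"
      using Y blowup_center_iff[OF yc(2,3)] unfolding yc(1) by (simp add: not_less)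
    ultimately have "\<nu> (a \<otimes> c) \<le> \<nu> (s \<otimes> t)"
      using xa yc Rb.M_carrier by (simp add: val_mult add_mono)
    moreover have "X \<otimes>\<^bsub>R'\<^esub> Y = frac R (powers R b) (a \<otimes> c) (s \<otimes> t)"
      using xa yc by (simp add: R'_ops Rb.mult_frac)
    ultimately show "X \<otimes>\<^bsub>R'\<^esub> Y \<in> S"
      using XY blowup_center_iff[of "a \<otimes> c" "s \<otimes> t"] xa yc by (simp add: not_less)
  qed
qed

sublocale R1: localization R' S
  by (intro localization.intro R'_cring S_submonoid)

lemma zero_notin_S: "\<zero>\<^bsub>R'\<^esub> \<notin> S"
proof -
  have z: "\<zero>\<^bsub>R'\<^esub> = frac R (powers R b) \<zero> \<one>"
    by (simp add: R'_ops Rb.loc_ring_zero)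
  have "\<nu> \<one> < \<nu> \<zero>"
    using val unfolding valuation_def by (simp add: zero_extended_def)
  moreover have "frac R (powers R b) \<zero> \<one> \<in> carrier R'"
    using R1.zero_closed unfolding z .
  ultimately have "frac R (powers R b) \<zero> \<one> \<in> blowup_center R \<nu> b A"
    using blowup_center_iff[OF zero_closed Rb.M.one_closed] by blast
  then show ?thesis unfolding z by blast
qed

definition IRb :: "nat \<Rightarrow> ('a \<times> 'a) set set" where
  "IRb k = {frac R (powers R b) z s | z s. z \<in> Ipow k \<and> s \<in> powers R b}"

lemma IRb_I: "z \<in> Ipow k \<Longrightarrow> s \<in> powers R b \<Longrightarrow> frac R (powers R b) z s \<in> IRb k"
  unfolding IRb_def by blast

lemma IRbE:
  assumes "X \<in> IRb k"
  obtains z s where "z \<in> Ipow k" "s \<in> powers R b" "X = frac R (powers R b) z s"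
  using assms unfolding IRb_def by blast

lemma IRb_carrier: "X \<in> IRb k \<Longrightarrow> X \<in> carrier Rb"
  by (auto elim: IRbE intro: Rb.frac_closed Ipow_carrier)

lemma IRb_add:
  assumes "X \<in> IRb k" "Y \<in> IRb k"
  shows "X \<oplus>\<^bsub>Rb\<^esub> Y \<in> IRb k"
proof -
  obtain z s where X: "z \<in> Ipow k" "s \<in> powers R b" "X = frac R (powers R b) z s"
    using assms(1) by (rule IRbE)
  obtain z' s' where Y: "z' \<in> Ipow k" "s' \<in> powers R b" "Y = frac R (powers R b) z' s'"
    using assms(2) by (rule IRbE)
  have "z \<otimes> s' \<oplus> z' \<otimes> s \<in> Ipow k"
    using X Y Rb.M_carrier Ipow_ideal
    by (blast intro: ideal.I_r_closed additive_subgroup.a_closed ideal.axioms(1))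
  then show ?thesis
    using X Y by (simp add: Rb.add_frac Ipow_carrier IRb_I)
qed

lemma IRb_mult:
  assumes "X \<in> IRb k" "Y \<in> IRb l"
  shows "X \<otimes>\<^bsub>Rb\<^esub> Y \<in> IRb (k + l)"
proof -
  obtain z s where X: "z \<in> Ipow k" "s \<in> powers R b" "X = frac R (powers R b) z s"
    using assms(1) by (rule IRbE)
  obtain z' s' where Y: "z' \<in> Ipow l" "s' \<in> powers R b" "Y = frac R (powers R b) z' s'"
    using assms(2) by (rule IRbE)
  have "z \<otimes> z' \<in> Ipow (k + l)" using X(1) Y(1) by (rule ideal_pow_mult[OF nilrad_ideal])
  then show ?thesis
    using X Y by (simp add: Rb.mult_frac Ipow_carrier IRb_I)
qed

lemma carrier_Rb_IRb_0: "X \<in> carrier Rb \<Longrightarrow> X \<in> IRb 0"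
  by (elim Rb.loc_ring_carrierE) (simp add: IRb_I)

lemma IRb_antimono: "j \<le> k \<Longrightarrow> X \<in> IRb k \<Longrightarrow> X \<in> IRb j"
  using ideal_pow_antimono[OF nilrad_ideal] by (blast elim: IRbE intro: IRb_I)

lemma IRb_mult_right: "X \<in> IRb k \<Longrightarrow> Y \<in> carrier Rb \<Longrightarrow> X \<otimes>\<^bsub>Rb\<^esub> Y \<in> IRb k"
  using IRb_mult[of X k Y 0] carrier_Rb_IRb_0 by simp

lemma IRb_mult_left: "X \<in> IRb k \<Longrightarrow> Y \<in> carrier Rb \<Longrightarrow> Y \<otimes>\<^bsub>Rb\<^esub> X \<in> IRb k"
  using IRb_mult_right IRb_carrier Rb.loc.m_comm by metis

lemma IRb_zero: "\<zero>\<^bsub>Rb\<^esub> \<in> IRb k"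
  unfolding Rb.loc_ring_zero
  using additive_subgroup.zero_closed[OF ideal.axioms(1)[OF Ipow_ideal]] by (simp add: IRb_I)

lemma IRb_uminus: "X \<in> IRb k \<Longrightarrow> \<ominus>\<^bsub>Rb\<^esub> X \<in> IRb k"
proof (elim IRbE)
  fix z s assume "z \<in> Ipow k" "s \<in> powers R b" "X = frac R (powers R b) z s"
  moreover have "\<ominus> z \<in> Ipow k"
    using additive_subgroup.a_inv_closed[OF ideal.axioms(1)[OF Ipow_ideal] \<open>z \<in> Ipow k\<close>] .
  ultimately show ?thesis by (simp add: Rb.uminus_frac Ipow_carrier IRb_I)
qed

lemma IRb_finsum: "finite B \<Longrightarrow> f \<in> B \<rightarrow> IRb k \<Longrightarrow> finsum Rb f B \<in> IRb k"
proof (induction B rule: finite_induct)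
  case empty
  then show ?case using IRb_zero by simp
next
  case (insert j B)
  then have "f \<in> B \<rightarrow> carrier Rb" "f j \<in> carrier Rb" using IRb_carrier by auto
  then show ?case using insert IRb_add by (simp add: Rb.loc.finsum_insert)
qed

lemma IRb_nilpotent:
  assumes k: "1 \<le> k" and X: "X \<in> IRb k"
  shows "\<exists>m. X [^]\<^bsub>Rb\<^esub> (m::nat) = \<zero>\<^bsub>Rb\<^esub>"
proof -
  obtain z s where Xz: "z \<in> Ipow k" "s \<in> powers R b" "X = frac R (powers R b) z s"
    using X by (rule IRbE)
  have "z \<in> nilrad R"
    using ideal_pow_antimono[OF nilrad_ideal k] ideal_pow_1[OF nilrad_ideal] Xz(1) by blast
  then obtain m where m: "z [^] (m::nat) = \<zero>" and zc: "z \<in> carrier R"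
    unfolding nilrad_def by blast
  have "X [^]\<^bsub>Rb\<^esub> m = frac R (powers R b) \<zero> (s [^] m)"
    unfolding Xz(3) m[symmetric] by (rule Rb.pow_frac[OF zc Xz(2)])
  also have "\<dots> = \<zero>\<^bsub>Rb\<^esub>"
    unfolding Rb.loc_ring_zero using Xz(2) Rb.M_pow Rb.M_carrier by (intro Rb.frac_eqI) auto
  finally show ?thesis by blast
qed

lemma nilpotent_IRb_1:
  assumes X: "X \<in> carrier Rb" and m: "X [^]\<^bsub>Rb\<^esub> (m::nat) = \<zero>\<^bsub>Rb\<^esub>"
  shows "X \<in> IRb 1"
proof -
  obtain a s where xa: "X = frac R (powers R b) a s" "a \<in> carrier R" "s \<in> powers R b"
    using X by (rule Rb.loc_ring_carrierE)
  have "frac R (powers R b) (a [^] m) (s [^] m) = frac R (powers R b) \<zero> \<one>"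
    using m Rb.pow_frac[OF xa(2,3)] xa(1) Rb.loc_ring_zero by simp
  then obtain t where t: "t \<in> powers R b" "t \<otimes> (a [^] m \<otimes> \<one>) = t \<otimes> (\<zero> \<otimes> s [^] m)"
    using Rb.frac_eq_iff[of "a [^] m" \<zero> "s [^] m" \<one>] xa Rb.M_pow by auto
  then have "t \<otimes> a [^] m \<in> nilrad R"
    using xa Rb.M_carrier ideal.Icarr
      additive_subgroup.zero_closed[OF ideal.axioms(1)[OF nilrad_ideal]]
    by simp
  then have "a \<in> nilrad R"
    using primeideal.I_prime[OF nilrad_prime] primeideal.nat_pow_mem_imp_mem[OF nilrad_prime]
      powers_not_nilrad[OF t(1)] t(1) xa(2) Rb.M_carrier by blast
  then show ?thesis using xa IRb_I ideal_pow_1[OF nilrad_ideal] by simp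
qed

text \<open>Every element of \<open>R' = R[A/b]\<close> is congruent to an element of \<open>R\<close> modulo \<open>I\<^sup>n R\<^sub>b\<close>,
  since the generators \<open>a/b\<close> lie in \<open>I\<^sup>n R\<^sub>b\<close>.\<close>

definition R_plus_IRb :: "nat \<Rightarrow> ('a \<times> 'a) set set" where
  "R_plus_IRb k = {frac R (powers R b) a \<one> \<oplus>\<^bsub>Rb\<^esub> N | a N. a \<in> carrier R \<and> N \<in> IRb k}"

lemma R_plus_IRb_subring: "subring (R_plus_IRb k) Rb"
proof (rule Rb.loc.subringI)
  note frac_one = Rb.frac_closed[OF _ Rb.M.one_closed]
  show "R_plus_IRb k \<subseteq> carrier Rb"
    unfolding R_plus_IRb_def using frac_one IRb_carrier by blast
  show "\<one>\<^bsub>Rb\<^esub> \<in> R_plus_IRb k"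
    unfolding R_plus_IRb_def using IRb_zero frac_one[OF one_closed]
    by (intro CollectI exI[of _ \<one>] exI[of _ "\<zero>\<^bsub>Rb\<^esub>"]) (simp add: Rb.loc_ring_one)
next
  fix h assume "h \<in> R_plus_IRb k"
  then obtain a N where h: "a \<in> carrier R" "N \<in> IRb k" "h = frac R (powers R b) a \<one> \<oplus>\<^bsub>Rb\<^esub> N"
    unfolding R_plus_IRb_def by blast
  have "\<ominus>\<^bsub>Rb\<^esub> h = frac R (powers R b) (\<ominus> a) \<one> \<oplus>\<^bsub>Rb\<^esub> \<ominus>\<^bsub>Rb\<^esub> N"
    using h Rb.frac_closed[OF _ Rb.M.one_closed] IRb_carrier
    by (simp add: Rb.loc.minus_add Rb.uminus_frac)
  then show "\<ominus>\<^bsub>Rb\<^esub> h \<in> R_plus_IRb k"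
    unfolding R_plus_IRb_def using h IRb_uminus by blast
next
  fix h1 h2 assume "h1 \<in> R_plus_IRb k" "h2 \<in> R_plus_IRb k"
  then obtain a N a' N' where aN: "a \<in> carrier R" "N \<in> IRb k" "a' \<in> carrier R" "N' \<in> IRb k"
    and h: "h1 = frac R (powers R b) a \<one> \<oplus>\<^bsub>Rb\<^esub> N" "h2 = frac R (powers R b) a' \<one> \<oplus>\<^bsub>Rb\<^esub> N'"
    unfolding R_plus_IRb_def by blast
  define p q where "p = frac R (powers R b) a \<one>" and "q = frac R (powers R b) a' \<one>"
  have pq: "p \<in> carrier Rb" "q \<in> carrier Rb" using aN Rb.frac_closed unfolding p_def q_def by auto
  have N: "N \<in> carrier Rb" "N' \<in> carrier Rb" using aN IRb_carrier by auto
  have "h1 \<oplus>\<^bsub>Rb\<^esub> h2 = (p \<oplus>\<^bsub>Rb\<^esub> q) \<oplus>\<^bsub>Rb\<^esub> (N \<oplus>\<^bsub>Rb\<^esub> N')"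
    unfolding h p_def[symmetric] q_def[symmetric] using pq N by (simp add: Rb.loc.a_ac)
  moreover have "p \<oplus>\<^bsub>Rb\<^esub> q = frac R (powers R b) (a \<oplus> a') \<one>"
    unfolding p_def q_def using aN by (simp add: Rb.add_frac)
  ultimately show "h1 \<oplus>\<^bsub>Rb\<^esub> h2 \<in> R_plus_IRb k"
    unfolding R_plus_IRb_def using aN(1,3) IRb_add[OF aN(2,4)] by auto
  have "h1 \<otimes>\<^bsub>Rb\<^esub> h2 = p \<otimes>\<^bsub>Rb\<^esub> q \<oplus>\<^bsub>Rb\<^esub> (p \<otimes>\<^bsub>Rb\<^esub> N' \<oplus>\<^bsub>Rb\<^esub> N \<otimes>\<^bsub>Rb\<^esub> q \<oplus>\<^bsub>Rb\<^esub> N \<otimes>\<^bsub>Rb\<^esub> N')"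
    unfolding h p_def[symmetric] q_def[symmetric] using pq N by algebra
  moreover have "p \<otimes>\<^bsub>Rb\<^esub> q = frac R (powers R b) (a \<otimes> a') \<one>"
    unfolding p_def q_def using aN by (simp add: Rb.mult_frac)
  moreover have "N \<otimes>\<^bsub>Rb\<^esub> N' \<in> IRb k"
    using IRb_antimono[OF _ IRb_mult[OF aN(2,4)]] by simp
  then have "p \<otimes>\<^bsub>Rb\<^esub> N' \<oplus>\<^bsub>Rb\<^esub> N \<otimes>\<^bsub>Rb\<^esub> q \<oplus>\<^bsub>Rb\<^esub> N \<otimes>\<^bsub>Rb\<^esub> N' \<in> IRb k"
    using IRb_mult_left[OF aN(4) pq(1)] IRb_mult_right[OF aN(2) pq(2)] IRb_add by blast
  ultimately show "h1 \<otimes>\<^bsub>Rb\<^esub> h2 \<in> R_plus_IRb k"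
    unfolding R_plus_IRb_def using aN by auto
qed

lemma R'_subset_R_plus_IRb: "carrier R' \<subseteq> R_plus_IRb n"
  unfolding R'_carrier
proof (rule Rb.loc.generate_ring_min_subring1[OF R'_gens_carrier R_plus_IRb_subring])
  have "frac R (powers R b) x \<one> \<in> R_plus_IRb n" if "x \<in> carrier R" for x
    unfolding R_plus_IRb_def using that IRb_zero Rb.frac_closed[OF that Rb.M.one_closed]
    by (intro CollectI exI[of _ x] exI[of _ "\<zero>\<^bsub>Rb\<^esub>"]) simp
  moreover have "frac R (powers R b) y b \<in> R_plus_IRb n" if "y \<in> A" for y
  proof -
    have "frac R (powers R b) y b \<in> IRb n" using that A b_in_powers by (blast intro: IRb_I)
    then show ?thesis
      unfolding R_plus_IRb_def using IRb_carrier
      by (intro CollectI exI[of _ \<zero>] exI[of _ "frac R (powers R b) y b"])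
        (simp add: Rb.loc_ring_zero[symmetric])
  qed
  ultimately show "R'_gens \<subseteq> R_plus_IRb n"
    by blast
qed

definition IR1 :: "nat \<Rightarrow> (('a \<times> 'a) set \<times> ('a \<times> 'a) set) set set" where
  "IR1 k = {frac R' S P s | P s. P \<in> carrier R' \<and> P \<in> IRb k \<and> s \<in> S}"

lemma IR1_I: "P \<in> carrier R' \<Longrightarrow> P \<in> IRb k \<Longrightarrow> s \<in> S \<Longrightarrow> frac R' S P s \<in> IR1 k"
  unfolding IR1_def by blast

lemma IR1E:
  assumes "X \<in> IR1 k"
  obtains P s where "P \<in> carrier R'" "P \<in> IRb k" "s \<in> S" "X = frac R' S P s"
  using assms unfolding IR1_def by blast

lemma IR1_add:
  assumes "X \<in> IR1 k" "Y \<in> IR1 k"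
  shows "X \<oplus>\<^bsub>R1\<^esub> Y \<in> IR1 k"
proof -
  obtain P s where X: "P \<in> carrier R'" "P \<in> IRb k" "s \<in> S" "X = frac R' S P s"
    using assms(1) by (rule IR1E)
  obtain P' s' where Y: "P' \<in> carrier R'" "P' \<in> IRb k" "s' \<in> S" "Y = frac R' S P' s'"
    using assms(2) by (rule IR1E)
  have "P \<otimes>\<^bsub>R'\<^esub> s' \<oplus>\<^bsub>R'\<^esub> P' \<otimes>\<^bsub>R'\<^esub> s \<in> IRb k"
    using X Y R'_carrier_Rb by (simp add: R'_ops IRb_add IRb_mult_right)
  then show ?thesis
    unfolding X(4) Y(4) R1.add_frac[OF X(1) Y(1) X(3) Y(3)]
    using X Y R1.M.m_closed by (intro IR1_I) auto
qed

lemma IR1_mult: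
  assumes "X \<in> IR1 k" "Y \<in> IR1 l"
  shows "X \<otimes>\<^bsub>R1\<^esub> Y \<in> IR1 (k + l)"
proof -
  obtain P s where X: "P \<in> carrier R'" "P \<in> IRb k" "s \<in> S" "X = frac R' S P s"
    using assms(1) by (rule IR1E)
  obtain P' s' where Y: "P' \<in> carrier R'" "P' \<in> IRb l" "s' \<in> S" "Y = frac R' S P' s'"
    using assms(2) by (rule IR1E)
  have "P \<otimes>\<^bsub>R'\<^esub> P' \<in> IRb (k + l)" using X Y by (simp add: R'_ops IRb_mult)
  then show ?thesis
    unfolding X(4) Y(4) R1.mult_frac[OF X(1) Y(1) X(3) Y(3)]
    using X Y R1.M.m_closed by (intro IR1_I) auto
qed

lemma carrier_R1_IR1_0: "X \<in> carrier R1 \<Longrightarrow> X \<in> IR1 0"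
  by (elim R1.loc_ring_carrierE) (simp add: IR1_I R'_carrier_Rb carrier_Rb_IRb_0)

text \<open>A nilpotent \<open>P/s\<close> of \<open>R\<^sup>(\<^sup>1\<^sup>)\<close> has \<open>tP\<close> nilpotent in \<open>R'\<close> for some \<open>t \<in> S\<close>, and
  \<open>P/s = tP/ts\<close>.\<close>

lemma nilrad_R1_IR1_1:
  assumes Xn: "X \<in> nilrad R1"
  shows "X \<in> IR1 1"
proof -
  obtain m where Xc: "X \<in> carrier R1" and m: "X [^]\<^bsub>R1\<^esub> (m::nat) = \<zero>\<^bsub>R1\<^esub>"
    using Xn unfolding nilrad_def by blast
  obtain P s where X: "X = frac R' S P s" "P \<in> carrier R'" "s \<in> S"
    using Xc by (rule R1.loc_ring_carrierE)
  have "frac R' S (P [^]\<^bsub>R'\<^esub> m) (s [^]\<^bsub>R'\<^esub> m) = frac R' S \<zero>\<^bsub>R'\<^esub> \<one>\<^bsub>R'\<^esub>"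
    using m R1.pow_frac[OF X(2,3)] X(1) R1.loc_ring_zero by simp
  then obtain t where t: "t \<in> S"
    "t \<otimes>\<^bsub>R'\<^esub> (P [^]\<^bsub>R'\<^esub> m \<otimes>\<^bsub>R'\<^esub> \<one>\<^bsub>R'\<^esub>) = t \<otimes>\<^bsub>R'\<^esub> (\<zero>\<^bsub>R'\<^esub> \<otimes>\<^bsub>R'\<^esub> s [^]\<^bsub>R'\<^esub> m)"
    unfolding R1.frac_eq_iff[OF R1.nat_pow_closed[OF X(2)] R1.zero_closed R1.M_pow[OF X(3)]
        R1.M.one_closed]
    by blast
  have tc: "t \<in> carrier R'" "s \<in> carrier R'" using t X by auto
  have tP: "t \<otimes>\<^bsub>R'\<^esub> P \<in> carrier R'" using tc X by simp
  have tz: "t \<otimes>\<^bsub>R'\<^esub> P [^]\<^bsub>R'\<^esub> m = \<zero>\<^bsub>R'\<^esub>"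
    using t(2) tc X(2) R1.nat_pow_closed by simp
  have "m \<noteq> 0"
  proof
    assume "m = 0"
    then have "t = \<zero>\<^bsub>R'\<^esub>" using tz tc by simp
    then show False using t(1) zero_notin_S by simp
  qed
  then obtain m' where "m = Suc m'" by (cases m) auto
  then have "(t \<otimes>\<^bsub>R'\<^esub> P) [^]\<^bsub>R'\<^esub> m = t [^]\<^bsub>R'\<^esub> m' \<otimes>\<^bsub>R'\<^esub> (t \<otimes>\<^bsub>R'\<^esub> P [^]\<^bsub>R'\<^esub> m)"
    using tc X(2) by (simp add: R1.nat_pow_distrib R1.m_ac)
  also have "\<dots> = \<zero>\<^bsub>R'\<^esub>" using tz tc by simp
  finally have "(t \<otimes>\<^bsub>R'\<^esub> P) [^]\<^bsub>Rb\<^esub> m = \<zero>\<^bsub>Rb\<^esub>"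
    by (simp only: R'_ops)
  then have "t \<otimes>\<^bsub>R'\<^esub> P \<in> IRb 1"
    using nilpotent_IRb_1 R'_carrier_Rb[OF tP] by blast
  moreover have "X = frac R' S (t \<otimes>\<^bsub>R'\<^esub> P) (t \<otimes>\<^bsub>R'\<^esub> s)"
    using R1.frac_mult_cancel[OF X(2,3) t(1)] X(1) tc X(2) by (simp add: R1.m_comm)
  ultimately show ?thesis using IR1_I[OF tP _ R1.M.m_closed[OF t(1) X(3)]] by simp
qed

lemma ideal_pow_nilrad_R1_IR1: "ideal_pow R1 (nilrad R1) k \<subseteq> IR1 k"
proof (induct k)
  case 0
  then show ?case using carrier_R1_IR1_0 by auto
next
  case (Suc k)
  show ?case
  proof
    fix x assume "x \<in> ideal_pow R1 (nilrad R1) (Suc k)"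
    then have "x \<in> ideal_prod R1 (nilrad R1) (ideal_pow R1 (nilrad R1) k)" by simp
    then show "x \<in> IR1 (Suc k)"
    proof (induct x rule: ideal_prod.induct)
      case (prod i j)
      then show ?case using nilrad_R1_IR1_1 Suc IR1_mult[of i 1 j k] by auto
    next
      case (sum s1 s2)
      then show ?case using IR1_add by blast
    qed
  qed
qed

section \<open>Linear relations after blowing up\<close>

lemma frac_IRb_cleared:
  assumes X: "frac R (powers R b) a s \<in> IRb k" and a: "a \<in> carrier R" and s: "s \<in> powers R b"
  shows "\<exists>\<beta>\<in>powers R b. \<beta> \<otimes> a \<in> Ipow k"
proof -
  obtain z s' where z: "z \<in> Ipow k" "s' \<in> powers R b"
    "frac R (powers R b) a s = frac R (powers R b) z s'"
    using X by (rule IRbE) simp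
  obtain t where t: "t \<in> powers R b" "t \<otimes> (a \<otimes> s') = t \<otimes> (z \<otimes> s)"
    using z(3) Rb.frac_eq_iff[OF a Ipow_carrier[OF z(1)] s z(2)] by blast
  have "(t \<otimes> s') \<otimes> a = t \<otimes> (a \<otimes> s')"
    using t(1) z(2) a Rb.M_carrier by (simp add: m_ac)
  also have "\<dots> = t \<otimes> (z \<otimes> s)" by (rule t(2))
  also have "\<dots> \<in> Ipow k"
    using z(1) s t(1) Rb.M_carrier by (simp add: ideal.I_l_closed ideal.I_r_closed Ipow_ideal)
  finally show ?thesis using Rb.M.m_closed[OF t(1) z(2)] by blast
qed

lemma IR1_frac_cleared:
  assumes X: "frac R' S W T \<in> IR1 k" and W: "W \<in> carrier R'" and T: "T \<in> S"
  shows "\<exists>w\<in>S. w \<otimes>\<^bsub>R'\<^esub> W \<in> IRb k"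
proof -
  obtain P s where P: "P \<in> carrier R'" "P \<in> IRb k" "s \<in> S" "frac R' S W T = frac R' S P s"
    using X by (rule IR1E) simp
  obtain t where t: "t \<in> S" "t \<otimes>\<^bsub>R'\<^esub> (W \<otimes>\<^bsub>R'\<^esub> s) = t \<otimes>\<^bsub>R'\<^esub> (P \<otimes>\<^bsub>R'\<^esub> T)"
    using P(4) R1.frac_eq_iff[OF W P(1) T P(3)] by blast
  have "(t \<otimes>\<^bsub>R'\<^esub> s) \<otimes>\<^bsub>R'\<^esub> W = t \<otimes>\<^bsub>R'\<^esub> (W \<otimes>\<^bsub>R'\<^esub> s)"
    using t(1) P(3) W by (simp add: R1.m_ac)
  also have "\<dots> = t \<otimes>\<^bsub>R'\<^esub> (P \<otimes>\<^bsub>R'\<^esub> T)" by (rule t(2))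
  also have "\<dots> \<in> IRb k"
    using IRb_mult_left[OF IRb_mult_right[OF P(2)]] t(1) T R'_carrier_Rb by (simp add: R'_ops)
  finally show ?thesis using R1.M.m_closed[OF t(1) P(3)] by blast
qed

lemma frac_b_carrier_R': "a \<in> A \<Longrightarrow> frac R (powers R b) a b \<in> carrier R'"
  unfolding R'_carrier by (rule generate_ring.incl) blast

lemma blowup_quot_closed: "a \<in> A \<Longrightarrow> blowup_quot R \<nu> b A a \<in> carrier R1"
  unfolding blowup_quot_def by (intro R1.frac_closed frac_b_carrier_R' R1.M.one_closed)

lemma finsum_blowup_quot:
  assumes B: "finite B" and y: "y ` B \<subseteq> A" and V: "V \<in> B \<rightarrow> carrier R'" and T: "T \<in> S"
  shows "(\<Oplus>\<^bsub>R1\<^esub>i\<in>B. frac R' S (V i) T \<otimes>\<^bsub>R1\<^esub> blowup_quot R \<nu> b A (y i))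
    = frac R' S (\<Oplus>\<^bsub>R'\<^esub>i\<in>B. V i \<otimes>\<^bsub>R'\<^esub> frac R (powers R b) (y i) b) T"
proof -
  have VY: "(\<lambda>i. V i \<otimes>\<^bsub>R'\<^esub> frac R (powers R b) (y i) b) \<in> B \<rightarrow> carrier R'"
    using V y frac_b_carrier_R' by auto
  have "frac R' S (V i) T \<otimes>\<^bsub>R1\<^esub> blowup_quot R \<nu> b A (y i)
      = frac R' S (V i \<otimes>\<^bsub>R'\<^esub> frac R (powers R b) (y i) b) T" if "i \<in> B" for i
  proof -
    have "V i \<in> carrier R'" "y i \<in> A" using that V y by auto
    then show ?thesis
      unfolding blowup_quot_def
      using R1.mult_frac[OF _ frac_b_carrier_R' T R1.M.one_closed] T by simp
  qed
  then have "(\<Oplus>\<^bsub>R1\<^esub>i\<in>B. frac R' S (V i) T \<otimes>\<^bsub>R1\<^esub> blowup_quot R \<nu> b A (y i))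
      = (\<Oplus>\<^bsub>R1\<^esub>i\<in>B. frac R' S (V i \<otimes>\<^bsub>R'\<^esub> frac R (powers R b) (y i) b) T)"
    using VY T by (intro R1.loc.finsum_cong') (auto intro: R1.frac_closed)
  also have "\<dots> = frac R' S (\<Oplus>\<^bsub>R'\<^esub>i\<in>B. V i \<otimes>\<^bsub>R'\<^esub> frac R (powers R b) (y i) b) T"
    by (rule R1.finsum_frac[OF B VY T])
  finally show ?thesis .
qed

text \<open>Modulo \<open>I\<^sup>n\<^sup>+\<^sup>1 R\<^sub>b\<close>, the \<open>I\<^sup>n R\<^sub>b\<close>-parts of the coefficients do not contribute, because
  they are multiplied by elements \<open>a/b\<close> of \<open>I\<^sup>n R\<^sub>b\<close> and \<open>2n \<ge> n + 1\<close>.\<close>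

lemma frac_finsum_IRb:
  assumes B: "finite B" and a: "a \<in> B \<rightarrow> carrier R" and N: "N \<in> B \<rightarrow> IRb n" and y: "y ` B \<subseteq> A"
    and sum: "(\<Oplus>\<^bsub>Rb\<^esub>i\<in>B. (frac R (powers R b) (a i) \<one> \<oplus>\<^bsub>Rb\<^esub> N i) \<otimes>\<^bsub>Rb\<^esub> frac R (powers R b) (y i) b)
      \<in> IRb (Suc n)"
  shows "frac R (powers R b) (\<Oplus>i\<in>B. a i \<otimes> y i) b \<in> IRb (Suc n)"
proof -
  let ?Y = "\<lambda>i. frac R (powers R b) (y i) b"
  let ?NS = "\<Oplus>\<^bsub>Rb\<^esub>i\<in>B. N i \<otimes>\<^bsub>Rb\<^esub> ?Y i"
  have yc: "y i \<in> carrier R" if "i \<in> B" for i using that y A_carrier by auto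
  have Yc: "?Y i \<in> carrier Rb" if "i \<in> B" for i
    using yc[OF that] b_in_powers by (rule Rb.frac_closed)
  have Nc: "N i \<in> carrier Rb" if "i \<in> B" for i using that N IRb_carrier by auto
  have NY: "N i \<otimes>\<^bsub>Rb\<^esub> ?Y i \<in> IRb (Suc n)" if "i \<in> B" for i
  proof -
    have "?Y i \<in> IRb n" using that y A b_in_powers by (auto intro: IRb_I)
    then have "N i \<otimes>\<^bsub>Rb\<^esub> ?Y i \<in> IRb (n + n)" using that N by (auto intro: IRb_mult)
    then show ?thesis using n by (rule_tac IRb_antimono[of "Suc n" "n + n"]) auto
  qed
  have "(frac R (powers R b) (a i) \<one> \<oplus>\<^bsub>Rb\<^esub> N i) \<otimes>\<^bsub>Rb\<^esub> ?Y i
      = frac R (powers R b) (a i \<otimes> y i) b \<oplus>\<^bsub>Rb\<^esub> N i \<otimes>\<^bsub>Rb\<^esub> ?Y i" if "i \<in> B" for i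
  proof -
    have ai: "a i \<in> carrier R" using a that by blast
    have "frac R (powers R b) (a i) \<one> \<otimes>\<^bsub>Rb\<^esub> ?Y i = frac R (powers R b) (a i \<otimes> y i) b"
      using Rb.mult_frac[OF ai yc[OF that] Rb.M.one_closed b_in_powers] b(1) by simp
    then show ?thesis
      using Rb.loc.l_distr[OF Rb.frac_closed[OF ai Rb.M.one_closed] Nc[OF that] Yc[OF that]] by simp
  qed
  have F1: "(\<lambda>i. frac R (powers R b) (a i \<otimes> y i) b) \<in> B \<rightarrow> carrier Rb"
    using a yc b_in_powers by (auto intro: Rb.frac_closed)
  have F2: "(\<lambda>i. N i \<otimes>\<^bsub>Rb\<^esub> ?Y i) \<in> B \<rightarrow> carrier Rb"
    using Nc Yc by auto
  have "(\<Oplus>\<^bsub>Rb\<^esub>i\<in>B. (frac R (powers R b) (a i) \<one> \<oplus>\<^bsub>Rb\<^esub> N i) \<otimes>\<^bsub>Rb\<^esub> ?Y i)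
      = (\<Oplus>\<^bsub>Rb\<^esub>i\<in>B. frac R (powers R b) (a i \<otimes> y i) b \<oplus>\<^bsub>Rb\<^esub> N i \<otimes>\<^bsub>Rb\<^esub> ?Y i)"
    by (rule Rb.loc.finsum_cong') (use F1 F2 \<open>\<And>i. i \<in> B \<Longrightarrow> _ = _\<close> in auto)
  also have "\<dots> = (\<Oplus>\<^bsub>Rb\<^esub>i\<in>B. frac R (powers R b) (a i \<otimes> y i) b) \<oplus>\<^bsub>Rb\<^esub> ?NS"
    by (rule Rb.loc.finsum_addf[OF F1 F2])
  also have "(\<Oplus>\<^bsub>Rb\<^esub>i\<in>B. frac R (powers R b) (a i \<otimes> y i) b)
      = frac R (powers R b) (\<Oplus>i\<in>B. a i \<otimes> y i) b"
    using a yc by (intro Rb.finsum_frac[OF B _ b_in_powers]) auto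
  finally have eq: "(\<Oplus>\<^bsub>Rb\<^esub>i\<in>B. (frac R (powers R b) (a i) \<one> \<oplus>\<^bsub>Rb\<^esub> N i) \<otimes>\<^bsub>Rb\<^esub> ?Y i)
      = frac R (powers R b) (\<Oplus>i\<in>B. a i \<otimes> y i) b \<oplus>\<^bsub>Rb\<^esub> ?NS" .
  have "frac R (powers R b) (\<Oplus>i\<in>B. a i \<otimes> y i) b \<in> carrier Rb"
    using a yc b_in_powers by (intro Rb.frac_closed finsum_closed) auto
  moreover have "?NS \<in> carrier Rb" using F2 by (rule Rb.loc.finsum_closed)
  ultimately have "frac R (powers R b) (\<Oplus>i\<in>B. a i \<otimes> y i) b
      = (\<Oplus>\<^bsub>Rb\<^esub>i\<in>B. (frac R (powers R b) (a i) \<one> \<oplus>\<^bsub>Rb\<^esub> N i) \<otimes>\<^bsub>Rb\<^esub> ?Y i) \<oplus>\<^bsub>Rb\<^esub> \<ominus>\<^bsub>Rb\<^esub> ?NS"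
    unfolding eq by (simp add: Rb.loc.a_assoc Rb.loc.r_neg)
  moreover have "?NS \<in> IRb (Suc n)" using NY by (intro IRb_finsum[OF B]) auto
  ultimately show ?thesis using sum IRb_add IRb_uminus by simp
qed

lemma relation_coeffs_in_nilrad:
  fixes r :: nat
  assumes indep: "\<forall>c \<in> {..<r} \<rightarrow> carrier R.
      (\<Oplus>i\<in>{..<r}. c i \<otimes> y i) \<in> Ipow (Suc n) \<longrightarrow> (\<forall>i<r. c i \<in> nilrad R)"
    and y: "y \<in> {..<r} \<rightarrow> carrier R" and a: "a \<in> {..<r} \<rightarrow> carrier R" and s: "s \<in> powers R b"
    and rel: "frac R (powers R b) (\<Oplus>i\<in>{..<r}. a i \<otimes> y i) s \<in> IRb (Suc n)"
  shows "\<forall>i<r. a i \<in> nilrad R"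
proof -
  have "(\<Oplus>i\<in>{..<r}. a i \<otimes> y i) \<in> carrier R"
    using a y by (intro finsum_closed) auto
  then obtain \<beta> where \<beta>: "\<beta> \<in> powers R b" "\<beta> \<otimes> (\<Oplus>i\<in>{..<r}. a i \<otimes> y i) \<in> Ipow (Suc n)"
    using frac_IRb_cleared[OF rel _ s] by blast
  have \<beta>c: "\<beta> \<in> carrier R" using \<beta>(1) Rb.M_carrier by blast
  have ay: "a i \<in> carrier R" "y i \<in> carrier R" if "i < r" for i using a y that by auto
  have \<beta>a: "(\<lambda>i. \<beta> \<otimes> a i) \<in> {..<r} \<rightarrow> carrier R" using \<beta>c a by auto
  have "\<beta> \<otimes> (\<Oplus>i\<in>{..<r}. a i \<otimes> y i) = (\<Oplus>i\<in>{..<r}. \<beta> \<otimes> (a i \<otimes> y i))"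
    using \<beta>c ay by (intro finsum_rdistr) auto
  also have "\<dots> = (\<Oplus>i\<in>{..<r}. (\<beta> \<otimes> a i) \<otimes> y i)"
    using \<beta>c ay by (intro finsum_cong') (auto simp: m_assoc)
  finally have "\<forall>i<r. \<beta> \<otimes> a i \<in> nilrad R"
    using indep \<beta>(2) \<beta>a by auto
  then show ?thesis
    using primeideal.I_prime[OF nilrad_prime \<beta>c] powers_not_nilrad[OF \<beta>(1)] a by blast
qed

lemma relation_coeffs_in_IRb_1:
  fixes r :: nat
  assumes y: "\<forall>i<r. y i \<in> A"
    and indep: "\<forall>c \<in> {..<r} \<rightarrow> carrier R.
      (\<Oplus>i\<in>{..<r}. c i \<otimes> y i) \<in> Ipow (Suc n) \<longrightarrow> (\<forall>i<r. c i \<in> nilrad R)"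
    and X: "X \<in> {..<r} \<rightarrow> carrier R'"
    and rel: "(\<Oplus>\<^bsub>Rb\<^esub>i\<in>{..<r}. X i \<otimes>\<^bsub>Rb\<^esub> frac R (powers R b) (y i) b) \<in> IRb (Suc n)"
  shows "\<forall>i<r. X i \<in> IRb 1"
proof -
  have "\<forall>i\<in>{..<r}. \<exists>a N. a \<in> carrier R \<and> N \<in> IRb n \<and> X i = frac R (powers R b) a \<one> \<oplus>\<^bsub>Rb\<^esub> N"
    using X R'_subset_R_plus_IRb unfolding R_plus_IRb_def by blast
  then obtain a where "\<forall>i\<in>{..<r}. \<exists>N. a i \<in> carrier R \<and> N \<in> IRb n \<and>
      X i = frac R (powers R b) (a i) \<one> \<oplus>\<^bsub>Rb\<^esub> N"
    by (metis bchoice)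
  then obtain N where aN: "\<forall>i\<in>{..<r}. a i \<in> carrier R \<and> N i \<in> IRb n \<and>
      X i = frac R (powers R b) (a i) \<one> \<oplus>\<^bsub>Rb\<^esub> N i"
    by (metis bchoice)
  have yc: "y i \<in> carrier R" if "i < r" for i using y A_carrier that by blast
  have "(\<Oplus>\<^bsub>Rb\<^esub>i\<in>{..<r}. (frac R (powers R b) (a i) \<one> \<oplus>\<^bsub>Rb\<^esub> N i) \<otimes>\<^bsub>Rb\<^esub> frac R (powers R b) (y i) b)
      = (\<Oplus>\<^bsub>Rb\<^esub>i\<in>{..<r}. X i \<otimes>\<^bsub>Rb\<^esub> frac R (powers R b) (y i) b)"
  proof (rule Rb.loc.finsum_cong')
    show "(\<lambda>i. X i \<otimes>\<^bsub>Rb\<^esub> frac R (powers R b) (y i) b) \<in> {..<r} \<rightarrow> carrier Rb"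
      using R'_carrier_Rb X Rb.frac_closed[OF yc b_in_powers] by (auto intro: Rb.loc.m_closed)
  qed (use aN in simp_all)
  then have "frac R (powers R b) (\<Oplus>i\<in>{..<r}. a i \<otimes> y i) b \<in> IRb (Suc n)"
    using rel aN y by (intro frac_finsum_IRb[OF finite_lessThan]) auto
  then have aI: "\<forall>i<r. a i \<in> nilrad R"
    using relation_coeffs_in_nilrad[OF indep _ _ b_in_powers] aN yc by auto
  show ?thesis
  proof (intro allI impI)
    fix i assume i: "i < r"
    have "frac R (powers R b) (a i) \<one> \<in> IRb 1"
      using IRb_I[OF _ Rb.M.one_closed, of "a i" 1] ideal_pow_1[OF nilrad_ideal] aI i by simp
    moreover have "N i \<in> IRb 1" using aN i IRb_antimono[OF n] by blast
    ultimately show "X i \<in> IRb 1" using IRb_add aN i by simp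
  qed
qed

lemma frac_nilpotent_R1:
  assumes V: "V \<in> carrier R'" and T: "T \<in> S" and w: "w \<in> S" and wV: "w \<otimes>\<^bsub>R'\<^esub> V \<in> IRb 1"
  shows "frac R' S V T \<in> nilrad R1"
proof -
  have wc: "w \<in> carrier R'" using w by blast
  obtain m where "(w \<otimes>\<^bsub>R'\<^esub> V) [^]\<^bsub>Rb\<^esub> (m::nat) = \<zero>\<^bsub>Rb\<^esub>" using IRb_nilpotent wV by blast
  then have "w [^]\<^bsub>R'\<^esub> m \<otimes>\<^bsub>R'\<^esub> V [^]\<^bsub>R'\<^esub> m = \<zero>\<^bsub>R'\<^esub>"
    using R1.nat_pow_distrib[OF wc V] by (simp add: R'_ops)
  then have "w [^]\<^bsub>R'\<^esub> m \<otimes>\<^bsub>R'\<^esub> (V [^]\<^bsub>R'\<^esub> m \<otimes>\<^bsub>R'\<^esub> \<one>\<^bsub>R'\<^esub>)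
      = w [^]\<^bsub>R'\<^esub> m \<otimes>\<^bsub>R'\<^esub> (\<zero>\<^bsub>R'\<^esub> \<otimes>\<^bsub>R'\<^esub> T [^]\<^bsub>R'\<^esub> m)"
    using wc V T by simp
  then have "frac R' S (V [^]\<^bsub>R'\<^esub> m) (T [^]\<^bsub>R'\<^esub> m) = frac R' S \<zero>\<^bsub>R'\<^esub> \<one>\<^bsub>R'\<^esub>"
    using R1.frac_eq_iff[OF R1.nat_pow_closed[OF V] R1.zero_closed R1.M_pow[OF T] R1.M.one_closed]
      R1.M_pow[OF w] by blast
  then have "frac R' S V T [^]\<^bsub>R1\<^esub> m = \<zero>\<^bsub>R1\<^esub>"
    by (simp add: R1.pow_frac[OF V T] R1.loc_ring_zero)
  then show ?thesis unfolding nilrad_def using R1.frac_closed[OF V T] by blast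
qed

lemma blowup_relation_cleared:
  assumes B: "finite B" and y: "y ` B \<subseteq> A" and V: "V \<in> B \<rightarrow> carrier R'" and T: "T \<in> S"
    and rel: "(\<Oplus>\<^bsub>R1\<^esub>i\<in>B. frac R' S (V i) T \<otimes>\<^bsub>R1\<^esub> blowup_quot R \<nu> b A (y i)) \<in> IR1 k"
  shows "\<exists>w\<in>S. (\<Oplus>\<^bsub>Rb\<^esub>i\<in>B. (w \<otimes>\<^bsub>R'\<^esub> V i) \<otimes>\<^bsub>Rb\<^esub> frac R (powers R b) (y i) b) \<in> IRb k"
proof -
  let ?Y = "\<lambda>i. frac R (powers R b) (y i) b"
  have Y: "?Y i \<in> carrier R'" if "i \<in> B" for i using that y frac_b_carrier_R' by auto
  have Vi: "V i \<in> carrier R'" if "i \<in> B" for i using that V by auto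
  have VY: "(\<lambda>i. V i \<otimes>\<^bsub>R'\<^esub> ?Y i) \<in> B \<rightarrow> carrier R'" using V Y by auto
  obtain w where w: "w \<in> S" "w \<otimes>\<^bsub>R'\<^esub> (\<Oplus>\<^bsub>R'\<^esub>i\<in>B. V i \<otimes>\<^bsub>R'\<^esub> ?Y i) \<in> IRb k"
    using rel IR1_frac_cleared[OF _ R1.finsum_closed[OF VY] T]
    unfolding finsum_blowup_quot[OF B y V T] by blast
  have wc: "w \<in> carrier R'" using w(1) by blast
  have "w \<otimes>\<^bsub>R'\<^esub> (\<Oplus>\<^bsub>R'\<^esub>i\<in>B. V i \<otimes>\<^bsub>R'\<^esub> ?Y i) = (\<Oplus>\<^bsub>R'\<^esub>i\<in>B. w \<otimes>\<^bsub>R'\<^esub> (V i \<otimes>\<^bsub>R'\<^esub> ?Y i))"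
    by (rule R1.finsum_rdistr[OF B wc VY])
  also have "\<dots> = (\<Oplus>\<^bsub>R'\<^esub>i\<in>B. (w \<otimes>\<^bsub>R'\<^esub> V i) \<otimes>\<^bsub>R'\<^esub> ?Y i)"
    using wc Vi Y by (intro R1.finsum_cong') (auto simp: R1.m_assoc)
  also have "\<dots> = (\<Oplus>\<^bsub>Rb\<^esub>i\<in>B. (w \<otimes>\<^bsub>R'\<^esub> V i) \<otimes>\<^bsub>R'\<^esub> ?Y i)"
    using wc V Y by (intro R'_finsum[OF B]) auto
  finally show ?thesis
    using w by (auto simp: R'_ops)
qed

lemma blowup_quot_lin_indep:
  fixes r :: nat
  assumes y: "\<forall>i<r. y i \<in> A"
    and indep: "\<forall>c \<in> {..<r} \<rightarrow> carrier R.
      (\<Oplus>i\<in>{..<r}. c i \<otimes> y i) \<in> Ipow (Suc n) \<longrightarrow> (\<forall>i<r. c i \<in> nilrad R)"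
    and c: "c \<in> {..<r} \<rightarrow> carrier R1"
    and rel: "(\<Oplus>\<^bsub>R1\<^esub>i\<in>{..<r}. c i \<otimes>\<^bsub>R1\<^esub> blowup_quot R \<nu> b A (y i))
      \<in> ideal_pow R1 (nilrad R1) (Suc n)"
  shows "\<forall>i<r. c i \<in> nilrad R1"
proof -
  obtain T V where T: "T \<in> S" and V: "\<forall>i\<in>{..<r}. V i \<in> carrier R' \<and> c i = frac R' S (V i) T"
    using R1.common_denominator[OF finite_lessThan c] by blast
  have "(\<Oplus>\<^bsub>R1\<^esub>i\<in>{..<r}. c i \<otimes>\<^bsub>R1\<^esub> blowup_quot R \<nu> b A (y i))
      = (\<Oplus>\<^bsub>R1\<^esub>i\<in>{..<r}. frac R' S (V i) T \<otimes>\<^bsub>R1\<^esub> blowup_quot R \<nu> b A (y i))"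
    using V y T R1.frac_closed blowup_quot_closed
    by (intro R1.loc.finsum_cong') (auto intro!: R1.loc.m_closed)
  then have "(\<Oplus>\<^bsub>R1\<^esub>i\<in>{..<r}. frac R' S (V i) T \<otimes>\<^bsub>R1\<^esub> blowup_quot R \<nu> b A (y i)) \<in> IR1 (Suc n)"
    using subsetD[OF ideal_pow_nilrad_R1_IR1 rel] by simp
  moreover have "y ` {..<r} \<subseteq> A" "V \<in> {..<r} \<rightarrow> carrier R'" using y V by auto
  ultimately obtain w where w: "w \<in> S"
    "(\<Oplus>\<^bsub>Rb\<^esub>i\<in>{..<r}. (w \<otimes>\<^bsub>R'\<^esub> V i) \<otimes>\<^bsub>Rb\<^esub> frac R (powers R b) (y i) b) \<in> IRb (Suc n)"
    using blowup_relation_cleared[OF finite_lessThan _ _ T] by blast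
  have "(\<lambda>i. w \<otimes>\<^bsub>R'\<^esub> V i) \<in> {..<r} \<rightarrow> carrier R'" using w(1) V by auto
  then have "\<forall>i<r. w \<otimes>\<^bsub>R'\<^esub> V i \<in> IRb 1"
    using relation_coeffs_in_IRb_1[OF y indep _ w(2)] by blast
  then show ?thesis
    using frac_nilpotent_R1[OF _ T w(1)] V by simp
qed

end

theorem mainTheorem17:
  fixes R :: "'a ring"
    and m :: "'a set"
    and \<nu> :: "'a \<Rightarrow> 'g::linordered_ab_group_add extended"
    and y :: "nat \<Rightarrow> 'a"
    and b :: 'a
    and n r s :: nat
  assumes noeth: "noetherian_ring R"
    and loc: "local_ring R m"
    and val: "valuation R \<nu>"
    and cent: "centered_on R m \<nu>"
    and ass: "ass_primes R = {nilrad R}"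
    and n: "n \<ge> 1"
    and y_in: "\<forall>i < r + s. y i \<in> ideal_pow R (nilrad R) n"
    and y_gen: "\<forall>x \<in> ideal_pow R (nilrad R) n. \<exists>c \<in> {..<r + s} \<rightarrow> carrier R.
                   x \<ominus>\<^bsub>R\<^esub> (\<Oplus>\<^bsub>R\<^esub>i\<in>{..<r + s}. c i \<otimes>\<^bsub>R\<^esub> y i) \<in> ideal_pow R (nilrad R) (Suc n)"
    and b: "b \<in> carrier R - nilrad R"
    and indep: "\<forall>c \<in> {..<r} \<rightarrow> carrier R.
                   (\<Oplus>\<^bsub>R\<^esub>i\<in>{..<r}. c i \<otimes>\<^bsub>R\<^esub> y i) \<in> ideal_pow R (nilrad R) (Suc n)
                   \<longrightarrow> (\<forall>i < r. c i \<in> nilrad R)"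
  shows "\<forall>c \<in> {..<r} \<rightarrow> carrier (blowup_ring R \<nu> b (y ` {..<r})).
           (\<Oplus>\<^bsub>blowup_ring R \<nu> b (y ` {..<r})\<^esub>i\<in>{..<r}.
               c i \<otimes>\<^bsub>blowup_ring R \<nu> b (y ` {..<r})\<^esub> blowup_quot R \<nu> b (y ` {..<r}) (y i))
             \<in> ideal_pow (blowup_ring R \<nu> b (y ` {..<r})) (nilrad (blowup_ring R \<nu> b (y ` {..<r}))) (Suc n)
           \<longrightarrow> (\<forall>i < r. c i \<in> nilrad (blowup_ring R \<nu> b (y ` {..<r})))"
proof -
  have "cring R" using loc unfolding local_ring_def by blast
  moreover have "primeideal (nilrad R) R" using ass unfolding ass_primes_def by blast
  moreover have "y ` {..<r} \<subseteq> ideal_pow R (nilrad R) n" using y_in by auto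
  ultimately interpret blowup_setting R \<nu> b "y ` {..<r}" n
    using val b n by (intro blowup_setting.intro blowup_setting_axioms.intro) auto
  show ?thesis
    unfolding blowup_ring_def
  proof (intro ballI impI)
    fix c assume "c \<in> {..<r} \<rightarrow> carrier R1"
      and "(\<Oplus>\<^bsub>R1\<^esub>i\<in>{..<r}. c i \<otimes>\<^bsub>R1\<^esub> blowup_quot R \<nu> b (y ` {..<r}) (y i))
        \<in> ideal_pow R1 (nilrad R1) (Suc n)"
    then show "\<forall>i<r. c i \<in> nilrad R1"
      by (intro blowup_quot_lin_indep[OF _ indep]) auto
  qed
qed

end
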